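(* Let $K\ge2$. For every bandit problem $\underline\nu=(\nu_k)_{k\in[K]}$ in $\mathcal{D}_{-,+}$ and every suboptimal arm $a$ (i.e., $\Delta_a>0$), one has $\mathcal{K}_{\inf}(\nu_a,\mu^\star,\mathcal{D}_{-,+})=0$; consequently, every strategy that is uniformly fast convergent on $\mathcal{D}_{-,+}$ satisfies, for every bandit problem $\underline\nu$ in $\mathcal{D}_{-,+}$ with at least one suboptimal arm, \[ \liminf_{T\to\infty}\frac{R_T(\underline\nu)}{\ln T}=+\infty . \] The same holds with $\mathcal{D}_{-,+}$ replaced by $\mathcal{D}_{m,+}$ for any $m\in\mathbb{R}$ (both in the vanishing of $\mathcal{K}_{\inf}$ and in the conclusion for strategies uniformly fast convergent on $\mathcal{D}_{m,+}$).
   Context: Stochastic $K$-armed bandit: arm $a$ has distribution $\nu_a$ with mean $\mu_a$, $\mu^\star=\max_a\mu_a$, $\Delta_a=\mu^\star-\mu_a$; at each round the player picks $A_t$ based on past observations and auxiliary independent uniform randomization and receives a reward drawn from $\nu_{A_t}$; $R_T(\underline\nu)=T\mu^\star-\mathbb{E}[\sum_{t\le T}\mu_{A_t}]$. For $m<M$, $\mathcal{D}_{m,M}$ is the set of probability distributions supported on $[m,M]$; $\mathcal{D}_{-,+}=\bigcup_{m<M}\mathcal{D}_{m,M}$ and, for $m\in\mathbb{R}$, $\mathcal{D}_{m,+}=\bigcup_{M>m}\mathcal{D}_{m,M}$. A strategy is uniformly fast convergent on a model $\mathcal{D}$ if for every bandit problem $\underline\nu$ in $\mathcal{D}$ and every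 $\beta\in(0,1]$, $R_T(\underline\nu)/T^{\beta}\to0$. For a distribution $\nu$, $x\in\mathbb{R}$ and a model $\mathcal{D}$, $\mathcal{K}_{\inf}(\nu,x,\mathcal{D})=\inf\{\mathrm{KL}(\nu,\nu'):\nu'\in\mathcal{D},\ \mathbb{E}(\nu')>x\}$ (infimum of the empty set is $+\infty$), where $\mathrm{KL}$ is the Kullback–Leibler divergence and $\mathbb{E}(\nu')$ the mean of $\nu'$. *)

theory Defs
  imports "HOL-Probability.Probability"
begin

definition D_mM :: "real \<Rightarrow> real \<Rightarrow> real measure set" where
  "D_mM m M = {\<nu>. prob_space \<nu> \<and> sets \<nu> = sets borel \<and> emeasure \<nu> {m..M} = 1}"

text \<open>D_{-,+} = union over m < M of D_{m,M}.\<close>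
definition D_all :: "real measure set" where
  "D_all = {\<nu>. \<exists>m M. m < M \<and> \<nu> \<in> D_mM m M}"

definition D_mplus :: "real \<Rightarrow> real measure set" where
  "D_mplus m = {\<nu>. \<exists>M. m < M \<and> \<nu> \<in> D_mM m M}"

definition mean :: "real measure \<Rightarrow> real" where
  "mean \<nu> = (\<integral>x. x \<partial>\<nu>)"

text \<open>KL(P,Q) = integral of f ln f dQ with f = dP/dQ if P << Q, and +infinity otherwise.
  The integral is split into positive and negative parts (the negative part is always finite).\<close>
definition KL :: "real measure \<Rightarrow> real measure \<Rightarrow> ereal" where
  "KL P Q =
     (if absolutely_continuous Q P then
        (let f = (\<lambda>x. enn2real (RN_deriv Q P x));
             \<phi> = (\<lambda>x. f x * ln (f x))
         in enn2ereal (\<integral>\<^sup>+ x. ennreal (\<phi> x) \<partial>Q) - enn2ereal (\<integral>\<^sup>+ x. ennreal (- \<phi> x) \<partial>Q))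
      else \<infinity>)"

text \<open>K_inf(nu, x, D) = inf { KL(nu, nu') : nu' in D, E(nu') > x }; the infimum of the empty set is +infinity.\<close>
definition Kinf :: "real measure \<Rightarrow> real \<Rightarrow> real measure set \<Rightarrow> ereal" where
  "Kinf \<nu> x D = (INF \<nu>'\<in>{\<nu>'\<in>D. mean \<nu>' > x}. KL \<nu> \<nu>')"

text \<open>Arms are 0,...,K-1. A bandit problem in model D assigns a distribution in D to each arm.\<close>
definition bandit_in :: "real measure set \<Rightarrow> nat \<Rightarrow> (nat \<Rightarrow> real measure) \<Rightarrow> bool" where
  "bandit_in D K \<nu> \<longleftrightarrow> (\<forall>a<K. \<nu> a \<in> D)"

definition mu_star :: "nat \<Rightarrow> (nat \<Rightarrow> real measure) \<Rightarrow> real" where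
  "mu_star K \<nu> = Max ((\<lambda>a. mean (\<nu> a)) ` {..<K})"

text \<open>A strategy: at round t (t = 0,1,...) the arm is a measurable function of the
  auxiliary uniform variables U_0..U_t and of the past observed rewards Y_0..Y_{t-1}.\<close>
type_synonym strategy = "nat \<Rightarrow> (nat \<Rightarrow> real) \<Rightarrow> (nat \<Rightarrow> real) \<Rightarrow> nat"

definition is_strategy :: "nat \<Rightarrow> strategy \<Rightarrow> bool" where
  "is_strategy K \<pi> \<longleftrightarrow>
     (\<forall>t. (\<lambda>(u, y). \<pi> t u y) \<in>
        measurable (PiM {..t} (\<lambda>_. borel :: real measure) \<Otimes>\<^sub>M PiM {..<t} (\<lambda>_. borel :: real measure))
                   (count_space {..<K}))"

text \<open>Underlying probability space: for each round t an independent uniform variable U_t on [0,1]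
  and an independent table of rewards (X_{t,a})_{a<K}, X_{t,a} ~ nu_a. The observed reward at round t
  is X_{t,A_t}.\<close>
definition bandit_space :: "nat \<Rightarrow> (nat \<Rightarrow> real measure) \<Rightarrow> (nat \<Rightarrow> real \<times> (nat \<Rightarrow> real)) measure" where
  "bandit_space K \<nu> =
     PiM UNIV (\<lambda>t::nat. uniform_measure lborel {0..1::real} \<Otimes>\<^sub>M PiM {..<K} (\<lambda>a. \<nu> a))"

text \<open>Observed rewards strictly before round t (as a function extensional on {..<t}).\<close>
primrec obs_hist :: "strategy \<Rightarrow> (nat \<Rightarrow> real \<times> (nat \<Rightarrow> real)) \<Rightarrow> nat \<Rightarrow> (nat \<Rightarrow> real)" where
  "obs_hist \<pi> \<omega> 0 = (\<lambda>_. undefined)"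
| "obs_hist \<pi> \<omega> (Suc t) =
     (obs_hist \<pi> \<omega> t)(t := snd (\<omega> t) (\<pi> t (restrict (\<lambda>s. fst (\<omega> s)) {..t}) (obs_hist \<pi> \<omega> t)))"

definition arm :: "strategy \<Rightarrow> (nat \<Rightarrow> real \<times> (nat \<Rightarrow> real)) \<Rightarrow> nat \<Rightarrow> nat" where
  "arm \<pi> \<omega> t = \<pi> t (restrict (\<lambda>s. fst (\<omega> s)) {..t}) (obs_hist \<pi> \<omega> t)"

definition regret :: "nat \<Rightarrow> (nat \<Rightarrow> real measure) \<Rightarrow> strategy \<Rightarrow> nat \<Rightarrow> real" where
  "regret K \<nu> \<pi> T =
     real T * mu_star K \<nu> - (\<integral>\<omega>. (\<Sum>t<T. mean (\<nu> (arm \<pi> \<omega> t))) \<partial>bandit_space K \<nu>)"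

definition uniformly_fast_convergent :: "real measure set \<Rightarrow> nat \<Rightarrow> strategy \<Rightarrow> bool" where
  "uniformly_fast_convergent D K \<pi> \<longleftrightarrow>
     (\<forall>\<nu>. bandit_in D K \<nu> \<longrightarrow>
        (\<forall>\<beta>::real. 0 < \<beta> \<and> \<beta> \<le> 1 \<longrightarrow> (\<lambda>T. regret K \<nu> \<pi> T / real T powr \<beta>) \<longlonglongrightarrow> 0))"

end

theory Submission
  imports Defs "HOL-Real_Asymp.Real_Asymp"
begin

text \<open>
  Moving a small mass \<open>\<epsilon>\<close> of a distribution \<open>\<nu>\<close> supported on \<open>[m, M]\<close> to a far atom \<open>x\<close> gives
  \<open>\<nu>' = (1 - \<epsilon>) \<nu> + \<epsilon> \<delta>\<^sub>x\<close>: it stays in the model, its mean is at least \<open>m + \<epsilon> (x - m)\<close>, and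
  \<open>\<nu>\<close> has density \<open>1 / (1 - \<epsilon>)\<close> on \<open>[m, M]\<close> with respect to it, so \<open>KL(\<nu>, \<nu>') = - ln (1 - \<epsilon>)\<close>.
  Letting \<open>x \<rightarrow> \<infinity>\<close> and \<open>\<epsilon> \<rightarrow> 0\<close> gives \<open>K\<^sub>i\<^sub>n\<^sub>f = 0\<close>.

  The same perturbation gives the regret bound directly, without KL. Suppose \<open>R\<^sub>T \<le> r ln T\<close> for
  infinitely many \<open>T\<close> and put \<open>c = max r 1 / \<Delta>\<^sub>a\<close>. Then \<open>E N\<^sub>a(T) \<le> c ln T\<close>, so by Markov's inequality
  \<open>N\<^sub>a(T) \<le> n = \<lfloor>2 c ln T\<rfloor>\<close> with probability at least \<open>1/2\<close>. Replace \<open>\<nu>\<^sub>a\<close> by a mixture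
  \<open>\<nu>'\<^sub>a \<ge> q \<nu>\<^sub>a\<close> with \<open>q = exp (- 1 / (8 c))\<close> whose mean exceeds \<open>\<mu>\<^sup>*\<close> by \<open>1\<close>. On the first \<open>T\<close> rounds
  the new law dominates \<open>q ^ N\<^sub>a(T)\<close> times the old one, so the event \<open>N\<^sub>a(T) \<le> n\<close> keeps probability
  at least \<open>q ^ n / 2 \<ge> T powr (-1/4) / 2\<close>. In the new problem every round not spent on \<open>a\<close> costs at
  least \<open>1\<close>, hence its regret is at least \<open>(T - n) T powr (-1/4) / 2\<close>, which is not \<open>o(\<surd>T)\<close>.
\<close>

lemma D_mMD:
  assumes "\<nu> \<in> D_mM m M"
  shows "prob_space \<nu>" "sets \<nu> = sets borel" "AE y in \<nu>. y \<in> {m..M}"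
proof -
  show P: "prob_space \<nu>" and "sets \<nu> = sets borel" using assms by (auto simp: D_mM_def)
  interpret prob_space \<nu> by (rule P)
  have "prob {m..M} = 1" using assms by (auto simp: D_mM_def emeasure_eq_measure)
  then show "AE y in \<nu>. y \<in> {m..M}" by (rule AE_prob_1)
qed

lemma D_mM_le:
  assumes "\<nu> \<in> D_mM m M"
  shows "m \<le> M"
  using assms by (cases "m \<le> M") (auto simp: D_mM_def)

lemma D_allD:
  assumes "\<nu> \<in> D_all"
  shows "prob_space \<nu>" "sets \<nu> = sets borel"
  using assms D_mMD unfolding D_all_def by blast+

subsection \<open>Moving mass to a far atom\<close>

text \<open>\<open>mix_dirac \<nu> \<epsilon> x = (1 - \<epsilon>) \<nu> + \<epsilon> \<delta>\<^sub>x\<close>, written as a Bernoulli mixture of two kernels.\<close>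

definition mix_dirac :: "real measure \<Rightarrow> real \<Rightarrow> real \<Rightarrow> real measure" where
  "mix_dirac \<nu> \<epsilon> x = measure_pmf (bernoulli_pmf \<epsilon>) \<bind> (\<lambda>b. if b then return borel x else \<nu>)"

context
  fixes \<nu> :: "real measure" and \<epsilon> x :: real
  assumes prob: "prob_space \<nu>" and sets: "sets \<nu> = sets borel"
begin

lemma mix_dirac_kernel:
  "(\<lambda>b. if b then return borel x else \<nu>) \<in> measurable (measure_pmf (bernoulli_pmf \<epsilon>)) (subprob_algebra borel)"
proof -
  have "return borel x \<in> space (subprob_algebra borel)" "\<nu> \<in> space (subprob_algebra borel)"
    using prob sets by (auto simp: space_subprob_algebra prob_space_imp_subprob_space prob_space_return)
  then show ?thesis
    by (auto simp: measurable_cong_sets[of _ "count_space UNIV"])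
qed

lemma sets_mix_dirac: "sets (mix_dirac \<nu> \<epsilon> x) = sets borel"
  unfolding mix_dirac_def by (rule sets_bind_measurable[OF mix_dirac_kernel]) simp

lemma nn_integral_mix_dirac:
  assumes "0 \<le> \<epsilon>" "\<epsilon> \<le> 1" and f: "f \<in> borel_measurable borel"
  shows "(\<integral>\<^sup>+y. f y \<partial>mix_dirac \<nu> \<epsilon> x) = ennreal \<epsilon> * f x + ennreal (1 - \<epsilon>) * (\<integral>\<^sup>+y. f y \<partial>\<nu>)"
  using assms sets
  by (simp add: mix_dirac_def nn_integral_bind[OF f mix_dirac_kernel] nn_integral_measure_pmf
      nn_integral_count_space_finite UNIV_bool nn_integral_return ac_simps)

lemma prob_space_mix_dirac:
  assumes "0 \<le> \<epsilon>" "\<epsilon> \<le> 1"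
  shows "prob_space (mix_dirac \<nu> \<epsilon> x)"
proof
  have "emeasure (mix_dirac \<nu> \<epsilon> x) (space (mix_dirac \<nu> \<epsilon> x)) = (\<integral>\<^sup>+y. 1 \<partial>mix_dirac \<nu> \<epsilon> x)"
    by simp
  also have "\<dots> = ennreal \<epsilon> * 1 + ennreal (1 - \<epsilon>) * (\<integral>\<^sup>+y. 1 \<partial>\<nu>)"
    by (rule nn_integral_mix_dirac[OF assms]) simp
  also have "\<dots> = 1"
    using assms prob_space.emeasure_space_1[OF prob] by (simp flip: ennreal_plus)
  finally show "emeasure (mix_dirac \<nu> \<epsilon> x) (space (mix_dirac \<nu> \<epsilon> x)) = 1" .
qed

end

lemma mix_dirac_in_D_mM:
  assumes \<nu>: "\<nu> \<in> D_mM m M" and "0 \<le> \<epsilon>" "\<epsilon> \<le> 1" "M \<le> x"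
  shows "mix_dirac \<nu> \<epsilon> x \<in> D_mM m x"
proof -
  note \<nu>D = D_mMD[OF \<nu>]
  have "m \<le> x" using D_mM_le[OF \<nu>] \<open>M \<le> x\<close> by simp
  have "(\<integral>\<^sup>+y. indicator {m..x} y \<partial>\<nu>) = (\<integral>\<^sup>+y. 1 \<partial>\<nu>)"
    by (intro nn_integral_cong_AE eventually_mono[OF \<nu>D(3)]) (use assms in \<open>auto split: split_indicator\<close>)
  moreover have "emeasure (mix_dirac \<nu> \<epsilon> x) {m..x} = (\<integral>\<^sup>+y. indicator {m..x} y \<partial>mix_dirac \<nu> \<epsilon> x)"
    using sets_mix_dirac[OF \<nu>D(1,2)] by simp
  moreover have "(\<integral>\<^sup>+y. indicator {m..x} y \<partial>mix_dirac \<nu> \<epsilon> x)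
      = ennreal \<epsilon> * indicator {m..x} x + ennreal (1 - \<epsilon>) * (\<integral>\<^sup>+y. indicator {m..x} y \<partial>\<nu>)"
    by (rule nn_integral_mix_dirac[OF \<nu>D(1,2) assms(2,3)]) simp
  ultimately have "emeasure (mix_dirac \<nu> \<epsilon> x) {m..x} = 1"
    using assms \<open>m \<le> x\<close> prob_space.emeasure_space_1[OF \<nu>D(1)] by (simp flip: ennreal_plus)
  then show ?thesis
    using assms \<nu>D by (simp add: D_mM_def prob_space_mix_dirac sets_mix_dirac)
qed

lemma mean_mix_dirac_ge:
  assumes \<nu>: "\<nu> \<in> D_mM m M" and \<epsilon>: "0 \<le> \<epsilon>" "\<epsilon> \<le> 1" and "M \<le> x"
  shows "m + \<epsilon> * (x - m) \<le> mean (mix_dirac \<nu> \<epsilon> x)"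
proof -
  note \<nu>D = D_mMD[OF \<nu>]
  note mixD = D_mMD[OF mix_dirac_in_D_mM[OF assms]]
  interpret mix: prob_space "mix_dirac \<nu> \<epsilon> x" by (rule mixD(1))
  have "AE y in mix_dirac \<nu> \<epsilon> x. norm y \<le> \<bar>m\<bar> + \<bar>x\<bar>"
    by (rule eventually_mono[OF mixD(3)]) auto
  then have int_id: "integrable (mix_dirac \<nu> \<epsilon> x) (\<lambda>y. y)"
    by (rule mix.integrable_const_bound) (simp add: measurable_cong_sets[OF mixD(2) refl])
  then have int: "integrable (mix_dirac \<nu> \<epsilon> x) (\<lambda>y. y - m)" by simp
  have nonneg: "AE y in mix_dirac \<nu> \<epsilon> x. 0 \<le> y - m" using mixD(3) by auto
  have "ennreal (\<epsilon> * (x - m)) \<le> ennreal \<epsilon> * ennreal (x - m) + ennreal (1 - \<epsilon>) * (\<integral>\<^sup>+y. ennreal (y - m) \<partial>\<nu>)"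
    using assms D_mM_le[OF \<nu>] by (simp add: ennreal_mult)
  also have "\<dots> = (\<integral>\<^sup>+y. ennreal (y - m) \<partial>mix_dirac \<nu> \<epsilon> x)"
    using \<nu>D \<epsilon> by (simp add: nn_integral_mix_dirac)
  also have "\<dots> = ennreal (\<integral>y. y - m \<partial>mix_dirac \<nu> \<epsilon> x)"
    by (rule nn_integral_eq_integral[OF int nonneg])
  finally have "\<epsilon> * (x - m) \<le> (\<integral>y. y - m \<partial>mix_dirac \<nu> \<epsilon> x)"
    using integral_nonneg_AE[OF nonneg] by simp
  also have "\<dots> = mean (mix_dirac \<nu> \<epsilon> x) - m"
    using int_id mix.prob_space unfolding mean_def by (subst Bochner_Integration.integral_diff) auto
  finally show ?thesis by simp
qed

lemma x_minus_one_le_x_ln_x: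
  assumes "0 \<le> (x::real)"
  shows "x - 1 \<le> x * ln x"
proof (cases "x = 0")
  case False
  then have "0 < x" using assms by simp
  have "ln (1 / x) \<le> 1 / x - 1" using \<open>0 < x\<close> by (intro ln_le_minus_one) simp
  then have "- ln x \<le> 1 / x - 1" using \<open>0 < x\<close> by (simp add: ln_div)
  then have "x * - ln x \<le> x * (1 / x - 1)" using \<open>0 < x\<close> by (intro mult_left_mono) auto
  moreover have "x * (1 / x - 1) = 1 - x" using \<open>0 < x\<close> by (simp add: field_simps)
  ultimately show ?thesis by simp
qed simp

lemma ennreal_x_ln_x_bound:
  assumes "0 \<le> (x::real)"
  shows "ennreal x + ennreal (- (x * ln x)) \<le> ennreal (x * ln x) + 1"
proof (cases "0 \<le> x * ln x")
  case True
  then have "ennreal x \<le> ennreal (x * ln x + 1)"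
    using x_minus_one_le_x_ln_x[OF assms] by (intro ennreal_leI) simp
  then show ?thesis using True by (simp add: ennreal_neg)
next
  case False
  then show ?thesis
    using x_minus_one_le_x_ln_x[OF assms] assms by (simp add: ennreal_neg flip: ennreal_plus)
qed

lemma KL_nonneg:
  assumes P: "prob_space P" and Q: "prob_space Q" and sets: "sets P = sets Q"
  shows "0 \<le> KL P Q"
proof (cases "absolutely_continuous Q P")
  case ac: True
  interpret Q: prob_space Q by fact
  define f where "f x = enn2real (RN_deriv Q P x)" for x
  define pos where "pos = (\<integral>\<^sup>+x. ennreal (f x * ln (f x)) \<partial>Q)"
  define neg where "neg = (\<integral>\<^sup>+x. ennreal (- (f x * ln (f x))) \<partial>Q)"
  have f_measurable: "f \<in> borel_measurable Q" unfolding f_def by measurable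
  have "AE x in Q. RN_deriv Q P x \<noteq> \<infinity>"
    using ac sets P by (intro Q.RN_deriv_finite) (auto simp: prob_space_imp_sigma_finite)
  then have "(\<integral>\<^sup>+x. ennreal (f x) \<partial>Q) = (\<integral>\<^sup>+x. RN_deriv Q P x \<partial>Q)"
    by (intro nn_integral_cong_AE) (auto simp: f_def less_top elim!: eventually_mono)
  also have "\<dots> = emeasure (density Q (RN_deriv Q P)) (space Q)"
    by (simp add: emeasure_density)
  also have "\<dots> = 1"
    using Q.density_RN_deriv[OF ac sets] prob_space.emeasure_space_1[OF P] sets_eq_imp_space_eq[OF sets]
    by simp
  finally have "1 + neg = (\<integral>\<^sup>+x. ennreal (f x) + ennreal (- (f x * ln (f x))) \<partial>Q)"
    using f_measurable by (simp add: neg_def nn_integral_add)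
  also have "\<dots> \<le> (\<integral>\<^sup>+x. ennreal (f x * ln (f x)) + 1 \<partial>Q)"
    by (intro nn_integral_mono ennreal_x_ln_x_bound) (simp add: f_def)
  also have "\<dots> = 1 + pos"
    using f_measurable by (simp add: pos_def nn_integral_add add.commute Q.emeasure_space_1)
  finally have "neg \<le> pos" by (simp add: ennreal_add_left_cancel_le)
  then have "enn2ereal neg \<le> enn2ereal pos" by (simp add: less_eq_ennreal.rep_eq)
  then show ?thesis
    using ac by (simp add: KL_def Let_def f_def pos_def neg_def ereal_diff_positive)
qed (simp add: KL_def)

lemma emeasure_mix_dirac_support:
  assumes \<nu>: "\<nu> \<in> D_mM m M" and "0 \<le> \<epsilon>" "\<epsilon> \<le> 1" "M < x"
  shows "emeasure (mix_dirac \<nu> \<epsilon> x) {m..M} = ennreal (1 - \<epsilon>)"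
proof -
  note \<nu>D = D_mMD[OF \<nu>]
  have "emeasure (mix_dirac \<nu> \<epsilon> x) {m..M} = (\<integral>\<^sup>+y. indicator {m..M} y \<partial>mix_dirac \<nu> \<epsilon> x)"
    using \<nu>D by (simp add: sets_mix_dirac)
  also have "\<dots> = ennreal \<epsilon> * indicator {m..M} x + ennreal (1 - \<epsilon>) * (\<integral>\<^sup>+y. indicator {m..M} y \<partial>\<nu>)"
    using \<nu>D assms by (intro nn_integral_mix_dirac) auto
  also have "(\<integral>\<^sup>+y. indicator {m..M} y \<partial>\<nu>) = 1" using \<nu> \<nu>D by (simp add: D_mM_def)
  finally show ?thesis using \<open>M < x\<close> by simp
qed

text \<open>Below the atom, the mixture is \<open>(1 - \<epsilon>) \<nu>\<close>; this gives the density of \<open>\<nu>\<close> against it.\<close>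

lemma density_mix_dirac:
  assumes \<nu>: "\<nu> \<in> D_mM m M" and \<epsilon>: "0 < \<epsilon>" "\<epsilon> < 1" and "M < x"
  shows "density (mix_dirac \<nu> \<epsilon> x) (\<lambda>y. ennreal (1 / (1 - \<epsilon>)) * indicator {m..M} y) = \<nu>"
proof (rule measure_eqI)
  note \<nu>D = D_mMD[OF \<nu>]
  show "sets (density (mix_dirac \<nu> \<epsilon> x) (\<lambda>y. ennreal (1 / (1 - \<epsilon>)) * indicator {m..M} y)) = sets \<nu>"
    using \<nu>D by (simp add: sets_mix_dirac)
  fix A assume "A \<in> sets (density (mix_dirac \<nu> \<epsilon> x) (\<lambda>y. ennreal (1 / (1 - \<epsilon>)) * indicator {m..M} y))"
  then have A: "A \<in> sets borel" using \<nu>D by (simp add: sets_mix_dirac)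
  have "emeasure (density (mix_dirac \<nu> \<epsilon> x) (\<lambda>y. ennreal (1 / (1 - \<epsilon>)) * indicator {m..M} y)) A
      = (\<integral>\<^sup>+y. ennreal (1 / (1 - \<epsilon>)) * indicator {m..M} y * indicator A y \<partial>mix_dirac \<nu> \<epsilon> x)"
    using A \<nu>D by (subst emeasure_density) (auto simp: sets_mix_dirac measurable_cong_sets[OF sets_mix_dirac refl])
  also have "\<dots> = ennreal (1 - \<epsilon>) * (\<integral>\<^sup>+y. ennreal (1 / (1 - \<epsilon>)) * indicator {m..M} y * indicator A y \<partial>\<nu>)"
    using A \<nu>D \<epsilon> \<open>M < x\<close> by (simp add: nn_integral_mix_dirac)
  also have "(\<integral>\<^sup>+y. ennreal (1 / (1 - \<epsilon>)) * indicator {m..M} y * indicator A y \<partial>\<nu>)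
      = (\<integral>\<^sup>+y. ennreal (1 / (1 - \<epsilon>)) * indicator A y \<partial>\<nu>)"
    by (intro nn_integral_cong_AE eventually_mono[OF \<nu>D(3)]) (auto split: split_indicator)
  also have "ennreal (1 - \<epsilon>) * \<dots> = emeasure \<nu> A"
    using A \<nu>D \<epsilon> by (simp add: nn_integral_cmult_indicator mult.assoc[symmetric] flip: ennreal_mult)
  finally show "emeasure (density (mix_dirac \<nu> \<epsilon> x) (\<lambda>y. ennreal (1 / (1 - \<epsilon>)) * indicator {m..M} y)) A
      = emeasure \<nu> A" .
qed

lemma KL_mix_dirac:
  assumes \<nu>: "\<nu> \<in> D_mM m M" and \<epsilon>: "0 < \<epsilon>" "\<epsilon> < 1" and "M < x"
  shows "KL \<nu> (mix_dirac \<nu> \<epsilon> x) = ereal (- ln (1 - \<epsilon>))"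
proof -
  note \<nu>D = D_mMD[OF \<nu>]
  define Q where "Q = mix_dirac \<nu> \<epsilon> x"
  define c where "c = 1 / (1 - \<epsilon>)"
  define g where "g y = ennreal c * indicator {m..M} y" for y
  have c: "1 \<le> c" "0 \<le> c * ln c" using \<epsilon> by (auto simp: c_def field_simps)
  have sets_Q: "sets Q = sets borel" using \<nu>D by (simp add: Q_def sets_mix_dirac)
  have g: "g \<in> borel_measurable Q" unfolding g_def measurable_cong_sets[OF sets_Q refl] by simp
  have dens: "density Q g = \<nu>"
    unfolding Q_def g_def c_def by (rule density_mix_dirac[OF assms])
  have "AE y in Q. g y = RN_deriv Q \<nu> y"
    by (rule RN_deriv_unique_sigma_finite[OF g dens prob_space_imp_sigma_finite[OF \<nu>D(1)]])
  then have RN: "AE y in Q. enn2real (RN_deriv Q \<nu> y) * ln (enn2real (RN_deriv Q \<nu> y))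
      = c * ln c * indicator {m..M} y"
    by (rule eventually_mono) (use c in \<open>auto simp: g_def split: split_indicator dest: sym\<close>)
  have Q: "emeasure Q {m..M} = ennreal (1 - \<epsilon>)"
    unfolding Q_def using \<epsilon> \<open>M < x\<close> by (intro emeasure_mix_dirac_support[OF \<nu>]) auto
  have "(\<integral>\<^sup>+y. ennreal (enn2real (RN_deriv Q \<nu> y) * ln (enn2real (RN_deriv Q \<nu> y))) \<partial>Q)
      = (\<integral>\<^sup>+y. ennreal (c * ln c) * indicator {m..M} y \<partial>Q)"
    by (intro nn_integral_cong_AE eventually_mono[OF RN]) (auto split: split_indicator)
  also have "\<dots> = ennreal (c * ln c) * ennreal (1 - \<epsilon>)"
    using sets_Q Q by (simp add: nn_integral_cmult_indicator)
  also have "\<dots> = ennreal (- ln (1 - \<epsilon>))"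
    using c \<epsilon> by (simp add: c_def ln_div flip: ennreal_mult)
  finally have pos: "(\<integral>\<^sup>+y. ennreal (enn2real (RN_deriv Q \<nu> y) * ln (enn2real (RN_deriv Q \<nu> y))) \<partial>Q)
      = ennreal (- ln (1 - \<epsilon>))" .
  have "(\<integral>\<^sup>+y. ennreal (- (enn2real (RN_deriv Q \<nu> y) * ln (enn2real (RN_deriv Q \<nu> y)))) \<partial>Q)
      = (\<integral>\<^sup>+y. 0 \<partial>Q)"
    by (intro nn_integral_cong_AE eventually_mono[OF RN]) (use c in \<open>auto simp: ennreal_neg split: split_indicator\<close>)
  then have neg: "(\<integral>\<^sup>+y. ennreal (- (enn2real (RN_deriv Q \<nu> y) * ln (enn2real (RN_deriv Q \<nu> y)))) \<partial>Q) = 0"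
    by simp
  have "absolutely_continuous Q \<nu>" using absolutely_continuousI_density[OF g] by (simp add: dens)
  then show ?thesis
    using pos neg \<epsilon> by (simp add: KL_def Q_def[symmetric] Let_def zero_ennreal.rep_eq)
qed

subsection \<open>Vanishing of \<open>K\<^sub>i\<^sub>n\<^sub>f\<close>\<close>

definition upward_closed_model :: "real measure set \<Rightarrow> bool" where
  "upward_closed_model D \<longleftrightarrow>
     D \<subseteq> D_all \<and> (\<forall>\<nu>\<in>D. \<exists>m M. \<nu> \<in> D_mM m M \<and> (\<forall>M'\<ge>M. D_mM m M' \<subseteq> D))"

lemma D_mplus_subset_D_all: "D_mplus m \<subseteq> D_all"
  unfolding D_mplus_def D_all_def by blast

lemma D_mM_subset_D_mplus:
  assumes "m < M" "M \<le> M'"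
  shows "D_mM m M' \<subseteq> D_mplus m"
proof
  fix \<nu> assume "\<nu> \<in> D_mM m M'"
  moreover have "m < M'" using assms by simp
  ultimately show "\<nu> \<in> D_mplus m" unfolding D_mplus_def by blast
qed

lemma upward_closed_model_D_mplus: "upward_closed_model (D_mplus m)"
  unfolding upward_closed_model_def
proof (intro conjI ballI D_mplus_subset_D_all)
  fix \<nu> assume "\<nu> \<in> D_mplus m"
  then obtain M where "m < M" "\<nu> \<in> D_mM m M" by (auto simp: D_mplus_def)
  then show "\<exists>m' M. \<nu> \<in> D_mM m' M \<and> (\<forall>M'\<ge>M. D_mM m' M' \<subseteq> D_mplus m)"
    using D_mM_subset_D_mplus by blast
qed

lemma upward_closed_model_D_all: "upward_closed_model D_all"
  unfolding upward_closed_model_def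
proof (intro conjI ballI subset_refl)
  fix \<nu> assume "\<nu> \<in> D_all"
  then obtain m M where "m < M" "\<nu> \<in> D_mM m M" by (auto simp: D_all_def)
  then show "\<exists>m M. \<nu> \<in> D_mM m M \<and> (\<forall>M'\<ge>M. D_mM m M' \<subseteq> D_all)"
    using D_mM_subset_D_mplus D_mplus_subset_D_all by blast
qed

lemma upward_closed_modelE:
  assumes "upward_closed_model D" "\<nu> \<in> D"
  obtains m M where "\<nu> \<in> D_mM m M" "\<And>M'. M \<le> M' \<Longrightarrow> D_mM m M' \<subseteq> D"
  using assms unfolding upward_closed_model_def by blast

lemma Kinf_eq_0:
  assumes D: "upward_closed_model D" and "\<nu> \<in> D"
  shows "Kinf \<nu> t D = 0"
proof (rule antisym)
  obtain m M where \<nu>: "\<nu> \<in> D_mM m M" and DM: "\<And>M'. M \<le> M' \<Longrightarrow> D_mM m M' \<subseteq> D"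
    using upward_closed_modelE[OF assms] by blast
  note \<nu>D = D_mMD[OF \<nu>]
  have "0 \<le> KL \<nu> \<nu>'" if "\<nu>' \<in> D" for \<nu>'
    using that D \<nu>D D_allD[of \<nu>'] by (intro KL_nonneg) (auto simp: upward_closed_model_def)
  then show "0 \<le> Kinf \<nu> t D"
    unfolding Kinf_def by (auto intro: INF_greatest)
  show "Kinf \<nu> t D \<le> 0"
  proof (rule ereal_le_epsilon2)
    fix e :: real assume "0 < e"
    define \<epsilon> where "\<epsilon> = 1 - exp (- e)"
    have \<epsilon>: "0 < \<epsilon>" "\<epsilon> < 1" using \<open>0 < e\<close> by (auto simp: \<epsilon>_def)
    define x where "x = max (M + 1) (m + (\<bar>t\<bar> + \<bar>m\<bar> + 1) / \<epsilon>)"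
    have x: "M < x" "m + (\<bar>t\<bar> + \<bar>m\<bar> + 1) / \<epsilon> \<le> x" by (auto simp: x_def)
    have "\<bar>t\<bar> + \<bar>m\<bar> + 1 \<le> \<epsilon> * (x - m)"
      using \<epsilon> x(2) by (simp add: field_simps)
    moreover have "m + \<epsilon> * (x - m) \<le> mean (mix_dirac \<nu> \<epsilon> x)"
      using \<epsilon> x by (intro mean_mix_dirac_ge[OF \<nu>]) auto
    ultimately have "t < mean (mix_dirac \<nu> \<epsilon> x)" by linarith
    moreover have "mix_dirac \<nu> \<epsilon> x \<in> D"
      using mix_dirac_in_D_mM[OF \<nu>, of \<epsilon> x] DM[of x] \<epsilon> x by auto
    ultimately have "Kinf \<nu> t D \<le> KL \<nu> (mix_dirac \<nu> \<epsilon> x)"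
      unfolding Kinf_def by (intro INF_lower) auto
    also have "\<dots> = ereal e"
      using KL_mix_dirac[OF \<nu> \<epsilon> x(1)] by (simp add: \<epsilon>_def)
    finally show "Kinf \<nu> t D \<le> 0 + ereal e" by simp
  qed
qed

definition round_measure :: "nat \<Rightarrow> (nat \<Rightarrow> real measure) \<Rightarrow> (real \<times> (nat \<Rightarrow> real)) measure" where
  "round_measure K \<nu> = uniform_measure lborel {0..1::real} \<Otimes>\<^sub>M PiM {..<K} \<nu>"

lemma bandit_space_eq_PiM: "bandit_space K \<nu> = PiM UNIV (\<lambda>_. round_measure K \<nu>)"
  by (simp add: bandit_space_def round_measure_def)

lemma prob_space_round_measure:
  assumes "\<And>b. b < K \<Longrightarrow> prob_space (\<nu> b)"
  shows "prob_space (round_measure K \<nu>)"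
  unfolding round_measure_def
  by (intro prob_space_pair prob_space_uniform_measure prob_space_PiM) (auto simp: assms)

lemma prob_space_bandit_space:
  assumes "\<And>b. b < K \<Longrightarrow> prob_space (\<nu> b)"
  shows "prob_space (bandit_space K \<nu>)"
  unfolding bandit_space_eq_PiM by (intro prob_space_PiM prob_space_round_measure assms)

lemma sets_PiM_round_measure:
  assumes "\<And>b. b < K \<Longrightarrow> sets (\<nu> b) = sets (\<nu>' b)"
  shows "sets (PiM I (\<lambda>_. round_measure K \<nu>)) = sets (PiM I (\<lambda>_. round_measure K \<nu>'))"
  unfolding round_measure_def
  by (intro sets_PiM_cong refl sets_pair_measure_cong) (auto simp: assms)

subsection \<open>Histories\<close>

definition same_history :: "strategy \<Rightarrow> nat \<Rightarrow> (nat \<Rightarrow> real \<times> (nat \<Rightarrow> real)) \<Rightarrow> (nat \<Rightarrow> real \<times> (nat \<Rightarrow> real)) \<Rightarrow> bool" where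
  "same_history \<pi> T w1 w2 \<longleftrightarrow>
     (\<forall>s<T. fst (w1 s) = fst (w2 s) \<and> snd (w1 s) (arm \<pi> w1 s) = snd (w2 s) (arm \<pi> w2 s))"

definition pulls :: "strategy \<Rightarrow> nat \<Rightarrow> (nat \<Rightarrow> real \<times> (nat \<Rightarrow> real)) \<Rightarrow> nat \<Rightarrow> nat" where
  "pulls \<pi> a w T = card {t\<in>{..<T}. arm \<pi> w t = a}"

lemma obs_hist_Suc_arm: "obs_hist \<pi> w (Suc t) = (obs_hist \<pi> w t)(t := snd (w t) (arm \<pi> w t))"
  by (simp add: arm_def)

lemma obs_hist_extensional: "obs_hist \<pi> w t \<in> extensional {..<t}"
  by (induction t) (auto simp: extensional_def)

lemma arm_less:
  assumes "is_strategy K \<pi>"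
  shows "arm \<pi> w t < K"
proof -
  have "(restrict (\<lambda>s. fst (w s)) {..t}, obs_hist \<pi> w t)
      \<in> space (PiM {..t} (\<lambda>_. borel :: real measure) \<Otimes>\<^sub>M PiM {..<t} (\<lambda>_. borel :: real measure))"
    using obs_hist_extensional[of \<pi> w t] by (simp add: space_pair_measure space_PiM PiE_def)
  from measurable_space[OF assms[unfolded is_strategy_def, rule_format] this] show ?thesis
    by (simp add: arm_def)
qed

lemma same_history_Suc:
  "same_history \<pi> (Suc T) w1 w2 \<longleftrightarrow> same_history \<pi> T w1 w2 \<and> fst (w1 T) = fst (w2 T) \<and>
     snd (w1 T) (arm \<pi> w1 T) = snd (w2 T) (arm \<pi> w2 T)"
  by (auto simp: same_history_def less_Suc_eq)

lemma same_history_obs_hist: "same_history \<pi> T w1 w2 \<Longrightarrow> obs_hist \<pi> w1 T = obs_hist \<pi> w2 T"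
proof (induction T)
  case (Suc T)
  then show ?case by (simp only: same_history_Suc obs_hist_Suc_arm)
qed simp

lemma same_history_arm:
  assumes "same_history \<pi> T w1 w2" "fst (w1 T) = fst (w2 T)"
  shows "arm \<pi> w1 T = arm \<pi> w2 T"
proof -
  have "restrict (\<lambda>s. fst (w1 s)) {..T} = restrict (\<lambda>s. fst (w2 s)) {..T}"
    using assms by (auto simp: same_history_def restrict_def le_less)
  then show ?thesis using same_history_obs_hist[OF assms(1)] by (simp add: arm_def)
qed

lemma same_history_arm_less:
  assumes "same_history \<pi> T w1 w2" "t < T"
  shows "arm \<pi> w1 t = arm \<pi> w2 t"
  using assms by (intro same_history_arm) (auto simp: same_history_def)

lemma same_history_if_eq: "(\<And>s. s < T \<Longrightarrow> w1 s = w2 s) \<Longrightarrow> same_history \<pi> T w1 w2"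
proof (induction T)
  case (Suc T)
  then have "same_history \<pi> T w1 w2" "w1 T = w2 T" by auto
  then show ?case using same_history_arm by (simp add: same_history_Suc)
qed (simp add: same_history_def)

lemma arm_fun_upd: "t < T \<Longrightarrow> arm \<pi> (w(T := c)) t = arm \<pi> w t"
  by (rule same_history_arm_less[OF same_history_if_eq]) auto

lemma same_history_fun_upd:
  "same_history \<pi> T w1 w2 \<Longrightarrow> same_history \<pi> T (w1(T := c)) (w2(T := c))"
  by (simp add: same_history_def arm_fun_upd)

lemma pulls_cong: "same_history \<pi> T w1 w2 \<Longrightarrow> pulls \<pi> a w1 T = pulls \<pi> a w2 T"
  unfolding pulls_def by (rule arg_cong[where f=card]) (auto dest: same_history_arm_less)

lemma pulls_Suc: "pulls \<pi> a w (Suc T) = pulls \<pi> a w T + (if arm \<pi> w T = a then 1 else 0)"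
proof -
  have "{t\<in>{..<Suc T}. arm \<pi> w t = a}
      = (if arm \<pi> w T = a then insert T {t\<in>{..<T}. arm \<pi> w t = a} else {t\<in>{..<T}. arm \<pi> w t = a})"
    by (auto simp: less_Suc_eq)
  then show ?thesis by (simp add: pulls_def)
qed

lemma pulls_fun_upd: "pulls \<pi> a (w(T := c)) T = pulls \<pi> a w T"
  unfolding pulls_def by (rule arg_cong[where f=card]) (auto simp: arm_fun_upd)

lemma pulls_le: "pulls \<pi> a w T \<le> T"
  unfolding pulls_def by (rule order.trans[OF card_mono[of "{..<T}"]]) auto

lemma real_pulls_eq_sum: "real (pulls \<pi> a w T) = (\<Sum>t<T. if arm \<pi> w t = a then 1 else 0)"
  by (induction T) (simp_all add: pulls_def[of _ _ _ 0] pulls_Suc)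

lemma power_pulls_eq_prod:
  "(c :: 'a :: comm_monoid_mult) ^ pulls \<pi> a w T = (\<Prod>t<T. if arm \<pi> w t = a then c else 1)"
  by (induction T) (simp_all add: pulls_def[of _ _ _ 0] pulls_Suc power_add mult.commute)

context
  fixes K :: nat and \<nu> :: "nat \<Rightarrow> real measure" and \<pi> :: strategy and I :: "nat set"
  assumes sets_\<nu>: "\<And>b. b < K \<Longrightarrow> sets (\<nu> b) = sets borel"
    and strategy: "is_strategy K \<pi>"
begin

lemma measurable_aux_draw:
  assumes "s \<in> I"
  shows "(\<lambda>w. fst (w s)) \<in> borel_measurable (PiM I (\<lambda>_. round_measure K \<nu>))"
proof -
  have "(\<lambda>w. fst (w s)) \<in> measurable (PiM I (\<lambda>_. round_measure K \<nu>)) (uniform_measure lborel {0..1::real})"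
    unfolding round_measure_def by (rule measurable_compose[OF measurable_component_singleton[OF assms] measurable_fst])
  moreover have "measurable (PiM I (\<lambda>_. round_measure K \<nu>)) (uniform_measure lborel {0..1::real})
      = borel_measurable (PiM I (\<lambda>_. round_measure K \<nu>))"
    by (rule measurable_cong_sets) simp_all
  ultimately show ?thesis by simp
qed

lemma measurable_reward:
  assumes "s \<in> I" "b < K"
  shows "(\<lambda>w. snd (w s) b) \<in> borel_measurable (PiM I (\<lambda>_. round_measure K \<nu>))"
proof -
  have "(\<lambda>w. snd (w s)) \<in> measurable (PiM I (\<lambda>_. round_measure K \<nu>)) (PiM {..<K} \<nu>)"
    unfolding round_measure_def by (rule measurable_compose[OF measurable_component_singleton[OF assms(1)] measurable_snd])
  then have "(\<lambda>w. snd (w s) b) \<in> measurable (PiM I (\<lambda>_. round_measure K \<nu>)) (\<nu> b)"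
    by (rule measurable_compose[OF _ measurable_component_singleton]) (use assms in simp)
  moreover have "measurable (PiM I (\<lambda>_. round_measure K \<nu>)) (\<nu> b) = borel_measurable (PiM I (\<lambda>_. round_measure K \<nu>))"
    by (rule measurable_cong_sets) (simp_all add: sets_\<nu>[OF assms(2)])
  ultimately show ?thesis by simp
qed

lemma measurable_arm_of_obs_hist:
  assumes "{..t} \<subseteq> I"
    and "(\<lambda>w. obs_hist \<pi> w t) \<in> measurable (PiM I (\<lambda>_. round_measure K \<nu>)) (PiM {..<t} (\<lambda>_. borel :: real measure))"
  shows "(\<lambda>w. arm \<pi> w t) \<in> measurable (PiM I (\<lambda>_. round_measure K \<nu>)) (count_space {..<K})"
proof -
  have "(\<lambda>w. restrict (\<lambda>s. fst (w s)) {..t})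
      \<in> measurable (PiM I (\<lambda>_. round_measure K \<nu>)) (PiM {..t} (\<lambda>_. borel :: real measure))"
    by (rule measurable_restrict) (use assms(1) in \<open>auto intro: measurable_aux_draw\<close>)
  from measurable_compose[OF measurable_Pair[OF this assms(2)] strategy[unfolded is_strategy_def, rule_format]]
  show ?thesis by (simp add: arm_def)
qed

lemma measurable_obs_hist:
  "{..<t} \<subseteq> I \<Longrightarrow>
    (\<lambda>w. obs_hist \<pi> w t) \<in> measurable (PiM I (\<lambda>_. round_measure K \<nu>)) (PiM {..<t} (\<lambda>_. borel :: real measure))"
proof (induction t)
  case (Suc t)
  have obs: "(\<lambda>w. obs_hist \<pi> w t) \<in> measurable (PiM I (\<lambda>_. round_measure K \<nu>)) (PiM {..<t} (\<lambda>_. borel))"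
    using Suc.prems by (intro Suc.IH) auto
  have arm: "(\<lambda>w. arm \<pi> w t) \<in> measurable (PiM I (\<lambda>_. round_measure K \<nu>)) (count_space {..<K})"
    using Suc.prems by (intro measurable_arm_of_obs_hist[OF _ obs]) auto
  have "(\<lambda>w. snd (w t) (arm \<pi> w t)) \<in> borel_measurable (PiM I (\<lambda>_. round_measure K \<nu>))"
    by (rule measurable_compose_countable'[where f="\<lambda>b w. snd (w t) b", OF _ arm])
      (use Suc.prems in \<open>auto intro: measurable_reward\<close>)
  then have "(\<lambda>w. (obs_hist \<pi> w t)(t := snd (w t) (arm \<pi> w t)))
      \<in> measurable (PiM I (\<lambda>_. round_measure K \<nu>)) (PiM {..<Suc t} (\<lambda>_. borel))"
    by (intro measurable_fun_upd[OF _ obs]) auto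
  then show ?case by (simp only: obs_hist_Suc_arm)
qed (simp add: space_PiM_empty)

lemma measurable_arm:
  "{..t} \<subseteq> I \<Longrightarrow> (\<lambda>w. arm \<pi> w t) \<in> measurable (PiM I (\<lambda>_. round_measure K \<nu>)) (count_space {..<K})"
  by (rule measurable_arm_of_obs_hist) (auto intro!: measurable_obs_hist)

lemma measurable_comp_arm:
  assumes "{..t} \<subseteq> I" "g \<in> {..<K} \<rightarrow> space N"
  shows "(\<lambda>w. g (arm \<pi> w t)) \<in> measurable (PiM I (\<lambda>_. round_measure K \<nu>)) N"
  using assms by (intro measurable_compose[OF measurable_arm]) simp_all

lemma borel_measurable_pulls:
  assumes "{..<T} \<subseteq> I"
  shows "(\<lambda>w. real (pulls \<pi> a w T)) \<in> borel_measurable (PiM I (\<lambda>_. round_measure K \<nu>))"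
  unfolding real_pulls_eq_sum using assms
  by (intro borel_measurable_sum measurable_comp_arm) auto

lemma borel_measurable_few_pulls:
  assumes "{..<T} \<subseteq> I"
  shows "(\<lambda>w. if pulls \<pi> a w T \<le> n then 1 else 0 :: real) \<in> borel_measurable (PiM I (\<lambda>_. round_measure K \<nu>))"
proof -
  have "(\<lambda>w. if real (pulls \<pi> a w T) \<le> real n then 1 else 0 :: real) \<in> borel_measurable (PiM I (\<lambda>_. round_measure K \<nu>))"
    using borel_measurable_pulls[OF assms] by measurable
  then show ?thesis by simp
qed

lemma borel_measurable_power_pulls:
  assumes "{..<T} \<subseteq> I"
  shows "(\<lambda>w. c ^ pulls \<pi> a w T :: ennreal) \<in> borel_measurable (PiM I (\<lambda>_. round_measure K \<nu>))"
  unfolding power_pulls_eq_prod using assms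
  by (intro borel_measurable_prod_ennreal measurable_comp_arm) auto

end

lemma mean_le_mu_star: "b < K \<Longrightarrow> mean (\<nu> b) \<le> mu_star K \<nu>"
  unfolding mu_star_def by (intro Max_ge) auto

lemma mu_star_eqI:
  assumes "a < K" "\<And>b. b < K \<Longrightarrow> mean (\<nu> b) \<le> mean (\<nu> a)"
  shows "mu_star K \<nu> = mean (\<nu> a)"
  unfolding mu_star_def using assms by (intro Max_eqI) auto

lemma integral_le_regret:
  assumes prob: "\<And>b. b < K \<Longrightarrow> prob_space (\<nu> b)" and sets: "\<And>b. b < K \<Longrightarrow> sets (\<nu> b) = sets borel"
    and strategy: "is_strategy K \<pi>"
    and g: "integrable (bandit_space K \<nu>) g"
    and g_le: "\<And>w. g w \<le> (\<Sum>t<T. mu_star K \<nu> - mean (\<nu> (arm \<pi> w t)))"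
  shows "(\<integral>w. g w \<partial>bandit_space K \<nu>) \<le> regret K \<nu> \<pi> T"
proof -
  interpret B: prob_space "bandit_space K \<nu>" by (rule prob_space_bandit_space[OF prob])
  define S where "S w = (\<Sum>t<T. mean (\<nu> (arm \<pi> w t)))" for w
  have "S \<in> borel_measurable (bandit_space K \<nu>)"
    unfolding S_def bandit_space_eq_PiM by (intro borel_measurable_sum measurable_comp_arm[OF sets strategy]) auto
  moreover have "norm (S w) \<le> real T * (\<Sum>b<K. \<bar>mean (\<nu> b)\<bar>)" for w
  proof -
    have "norm (S w) \<le> (\<Sum>t<T. \<bar>mean (\<nu> (arm \<pi> w t))\<bar>)"
      unfolding S_def by (rule order.trans[OF norm_sum]) simp
    also have "\<dots> \<le> (\<Sum>t<T. \<Sum>b<K. \<bar>mean (\<nu> b)\<bar>)"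
      using arm_less[OF strategy] by (intro sum_mono member_le_sum[where f="\<lambda>b. \<bar>mean (\<nu> b)\<bar>"]) auto
    finally show ?thesis by simp
  qed
  ultimately have S: "integrable (bandit_space K \<nu>) S"
    by (intro B.integrable_const_bound[where B="real T * (\<Sum>b<K. \<bar>mean (\<nu> b)\<bar>)"]) auto
  have "g w \<le> real T * mu_star K \<nu> - S w" for w
    using g_le[of w] by (simp add: S_def sum_subtractf)
  moreover have "integrable (bandit_space K \<nu>) (\<lambda>w. real T * mu_star K \<nu> - S w)"
    using S by simp
  ultimately have "(\<integral>w. g w \<partial>bandit_space K \<nu>) \<le> (\<integral>w. real T * mu_star K \<nu> - S w \<partial>bandit_space K \<nu>)"
    by (intro integral_mono[OF g])
  also have "\<dots> = regret K \<nu> \<pi> T"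
    unfolding regret_def S_def[symmetric] using S B.prob_space
    by (subst Bochner_Integration.integral_diff) auto
  finally show ?thesis .
qed

lemma gap_mult_expected_pulls_le_regret:
  assumes prob: "\<And>b. b < K \<Longrightarrow> prob_space (\<nu> b)" and sets: "\<And>b. b < K \<Longrightarrow> sets (\<nu> b) = sets borel"
    and strategy: "is_strategy K \<pi>"
  shows "(mu_star K \<nu> - mean (\<nu> a)) * (\<integral>w. real (pulls \<pi> a w T) \<partial>bandit_space K \<nu>) \<le> regret K \<nu> \<pi> T"
proof -
  interpret B: prob_space "bandit_space K \<nu>" by (rule prob_space_bandit_space[OF prob])
  have "(\<lambda>w. real (pulls \<pi> a w T)) \<in> borel_measurable (bandit_space K \<nu>)"
    unfolding bandit_space_eq_PiM by (intro borel_measurable_pulls sets strategy) auto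
  then have "integrable (bandit_space K \<nu>) (\<lambda>w. (mu_star K \<nu> - mean (\<nu> a)) * real (pulls \<pi> a w T))"
    by (intro integrable_mult_right B.integrable_const_bound[where B=T]) (auto simp: pulls_le)
  moreover have "(mu_star K \<nu> - mean (\<nu> a)) * real (pulls \<pi> a w T)
      \<le> (\<Sum>t<T. mu_star K \<nu> - mean (\<nu> (arm \<pi> w t)))" for w
    unfolding real_pulls_eq_sum sum_distrib_left
    using mean_le_mu_star[OF arm_less[OF strategy]] by (intro sum_mono) auto
  ultimately have "(\<integral>w. (mu_star K \<nu> - mean (\<nu> a)) * real (pulls \<pi> a w T) \<partial>bandit_space K \<nu>) \<le> regret K \<nu> \<pi> T"
    by (intro integral_le_regret) (use prob sets strategy in auto)
  then show ?thesis by simp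
qed

lemma few_pulls_of_best_arm_le_regret:
  assumes prob: "\<And>b. b < K \<Longrightarrow> prob_space (\<nu> b)" and sets: "\<And>b. b < K \<Longrightarrow> sets (\<nu> b) = sets borel"
    and strategy: "is_strategy K \<pi>"
    and "a < K" and margin: "\<And>b. b < K \<Longrightarrow> b \<noteq> a \<Longrightarrow> mean (\<nu> b) + 1 \<le> mean (\<nu> a)"
    and "n \<le> T"
  shows "(real T - real n) * (\<integral>w. (if pulls \<pi> a w T \<le> n then 1 else 0) \<partial>bandit_space K \<nu>) \<le> regret K \<nu> \<pi> T"
proof -
  interpret B: prob_space "bandit_space K \<nu>" by (rule prob_space_bandit_space[OF prob])
  have best: "mu_star K \<nu> = mean (\<nu> a)"
    using margin \<open>a < K\<close> by (intro mu_star_eqI) force+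
  have "(\<lambda>w. if pulls \<pi> a w T \<le> n then 1 else 0 :: real) \<in> borel_measurable (bandit_space K \<nu>)"
    unfolding bandit_space_eq_PiM by (intro borel_measurable_few_pulls sets strategy) auto
  then have "integrable (bandit_space K \<nu>) (\<lambda>w. (real T - real n) * (if pulls \<pi> a w T \<le> n then 1 else 0))"
    by (intro integrable_mult_right B.integrable_const_bound[where B=1]) auto
  moreover have "(real T - real n) * (if pulls \<pi> a w T \<le> n then 1 else 0)
      \<le> (\<Sum>t<T. mu_star K \<nu> - mean (\<nu> (arm \<pi> w t)))" for w
  proof -
    have "(real T - real n) * (if pulls \<pi> a w T \<le> n then 1 else 0) \<le> real T - real (pulls \<pi> a w T)"
      using pulls_le[of \<pi> a w T] \<open>n \<le> T\<close> by auto
    also have "\<dots> = (\<Sum>t<T. 1 - (if arm \<pi> w t = a then 1 else 0))"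
      by (simp add: real_pulls_eq_sum sum_subtractf)
    also have "\<dots> = (\<Sum>t<T. if arm \<pi> w t = a then 0 else 1)"
      by (rule sum.cong) auto
    also have "\<dots> \<le> (\<Sum>t<T. mu_star K \<nu> - mean (\<nu> (arm \<pi> w t)))"
    proof (rule sum_mono)
      fix t
      have "arm \<pi> w t < K" by (rule arm_less[OF strategy])
      then show "(if arm \<pi> w t = a then 0 else 1) \<le> mu_star K \<nu> - mean (\<nu> (arm \<pi> w t))"
        using margin[of "arm \<pi> w t"] by (auto simp: best)
    qed
    finally show ?thesis .
  qed
  ultimately have "(\<integral>w. (real T - real n) * (if pulls \<pi> a w T \<le> n then 1 else 0) \<partial>bandit_space K \<nu>)
      \<le> regret K \<nu> \<pi> T"
    by (intro integral_le_regret) (use prob sets strategy in auto)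
  then show ?thesis by simp
qed

lemma (in prob_space) Markov_inequality_nat:
  assumes "integrable M (\<lambda>x. real (N x))"
  shows "1 - (\<integral>x. real (N x) \<partial>M) / (real n + 1) \<le> (\<integral>x. (if N x \<le> n then 1 else 0) \<partial>M)"
proof -
  have N: "(\<lambda>x. real (N x)) \<in> borel_measurable M" using assms by simp
  have "(\<lambda>x. if real (N x) \<le> real n then 1 else 0 :: real) \<in> borel_measurable M"
    using N by measurable
  then have indicator: "integrable M (\<lambda>x. if N x \<le> n then 1 else 0 :: real)"
    by (intro integrable_const_bound[where B=1]) auto
  have "1 - (if N x \<le> n then 1 else 0) \<le> real (N x) / (real n + 1)" for x
    by (auto simp: field_simps)
  then have "(\<integral>x. 1 - (if N x \<le> n then 1 else 0) \<partial>M) \<le> (\<integral>x. real (N x) / (real n + 1) \<partial>M)"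
    using assms indicator by (intro integral_mono) auto
  then show ?thesis
    using indicator prob_space by simp
qed

lemma half_le_prob_few_pulls:
  assumes prob: "\<And>b. b < K \<Longrightarrow> prob_space (\<nu> b)" and sets: "\<And>b. b < K \<Longrightarrow> sets (\<nu> b) = sets borel"
    and strategy: "is_strategy K \<pi>"
    and gap: "0 < mu_star K \<nu> - mean (\<nu> a)"
    and regret_small: "2 * regret K \<nu> \<pi> T \<le> (mu_star K \<nu> - mean (\<nu> a)) * (real n + 1)"
  shows "1 / 2 \<le> (\<integral>w. (if pulls \<pi> a w T \<le> n then 1 else 0 :: real) \<partial>bandit_space K \<nu>)"
proof -
  interpret B: prob_space "bandit_space K \<nu>" by (rule prob_space_bandit_space[OF prob])
  define N where "N w = real (pulls \<pi> a w T)" for w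
  have "N \<in> borel_measurable (bandit_space K \<nu>)"
    unfolding N_def bandit_space_eq_PiM by (intro borel_measurable_pulls sets strategy) auto
  then have N: "integrable (bandit_space K \<nu>) N"
    by (intro B.integrable_const_bound[where B=T]) (auto simp: N_def pulls_le)
  have "(mu_star K \<nu> - mean (\<nu> a)) * (\<integral>w. N w \<partial>bandit_space K \<nu>) \<le> regret K \<nu> \<pi> T"
    unfolding N_def by (intro gap_mult_expected_pulls_le_regret prob sets strategy)
  then have "(mu_star K \<nu> - mean (\<nu> a)) * (2 * (\<integral>w. N w \<partial>bandit_space K \<nu>))
      \<le> (mu_star K \<nu> - mean (\<nu> a)) * (real n + 1)"
    using regret_small by linarith
  then have "2 * (\<integral>w. N w \<partial>bandit_space K \<nu>) \<le> real n + 1"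
    using gap by (simp only: mult_le_cancel_left_pos)
  then have "(\<integral>w. N w \<partial>bandit_space K \<nu>) / (real n + 1) \<le> 1 / 2"
    by (simp add: field_simps)
  then show ?thesis
    using B.Markov_inequality_nat[OF N[unfolded N_def], of n] unfolding N_def by linarith
qed

subsection \<open>Change of measure\<close>

lemma nn_integral_bandit_space_restrict:
  assumes prob: "\<And>b. b < K \<Longrightarrow> prob_space (\<nu> b)"
    and F: "F \<in> borel_measurable (PiM {..<T} (\<lambda>_. round_measure K \<nu>))"
    and F_restrict: "\<And>w. F (restrict w {..<T}) = F w"
  shows "(\<integral>\<^sup>+w. F w \<partial>bandit_space K \<nu>) = (\<integral>\<^sup>+w. F w \<partial>PiM {..<T} (\<lambda>_. round_measure K \<nu>))"
proof -
  interpret product_prob_space "\<lambda>_::nat. round_measure K \<nu>" UNIV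
    by (intro product_prob_spaceI prob_space_round_measure prob)
  have "(\<integral>\<^sup>+w. F w \<partial>PiM {..<T} (\<lambda>_. round_measure K \<nu>))
      = (\<integral>\<^sup>+w. F w \<partial>distr (PiM UNIV (\<lambda>_. round_measure K \<nu>)) (PiM {..<T} (\<lambda>_. round_measure K \<nu>)) (\<lambda>w. restrict w {..<T}))"
    by (simp add: distr_PiM_restrict_finite)
  also have "\<dots> = (\<integral>\<^sup>+w. F (restrict w {..<T}) \<partial>PiM UNIV (\<lambda>_. round_measure K \<nu>))"
    using F by (intro nn_integral_distr) (auto intro: measurable_restrict_subset)
  finally show ?thesis by (simp add: F_restrict bandit_space_eq_PiM)
qed

lemma nn_integral_few_pulls:
  assumes prob: "\<And>b. b < K \<Longrightarrow> prob_space (\<nu> b)" and sets: "\<And>b. b < K \<Longrightarrow> sets (\<nu> b) = sets borel"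
    and strategy: "is_strategy K \<pi>"
  shows "(\<integral>\<^sup>+w. ennreal (if pulls \<pi> a w T \<le> n then 1 else 0) \<partial>PiM {..<T} (\<lambda>_. round_measure K \<nu>))
      = ennreal (\<integral>w. (if pulls \<pi> a w T \<le> n then 1 else 0) \<partial>bandit_space K \<nu>)"
proof -
  interpret B: prob_space "bandit_space K \<nu>" by (rule prob_space_bandit_space[OF prob])
  have meas: "(\<lambda>w. if pulls \<pi> a w T \<le> n then 1 else 0 :: real) \<in> borel_measurable (PiM I (\<lambda>_. round_measure K \<nu>))"
    if "{..<T} \<subseteq> I" for I
    using that by (intro borel_measurable_few_pulls sets strategy)
  have "pulls \<pi> a (restrict w {..<T}) T = pulls \<pi> a w T" for w
    by (intro pulls_cong same_history_if_eq) simp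
  then have "(\<integral>\<^sup>+w. ennreal (if pulls \<pi> a w T \<le> n then 1 else 0) \<partial>PiM {..<T} (\<lambda>_. round_measure K \<nu>))
      = (\<integral>\<^sup>+w. ennreal (if pulls \<pi> a w T \<le> n then 1 else 0) \<partial>bandit_space K \<nu>)"
    using meas[of "{..<T}"]
    by (intro nn_integral_bandit_space_restrict[symmetric] prob) auto
  also have "\<dots> = ennreal (\<integral>w. (if pulls \<pi> a w T \<le> n then 1 else 0) \<partial>bandit_space K \<nu>)"
    using meas[of UNIV]
    by (intro nn_integral_eq_integral B.integrable_const_bound[where B=1]) (auto simp: bandit_space_eq_PiM)
  finally show ?thesis .
qed

lemma nn_integral_PiM_component:
  assumes "\<And>i. i \<in> I \<Longrightarrow> prob_space (M i)" "i \<in> I" "f \<in> borel_measurable (M i)"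
  shows "(\<integral>\<^sup>+x. f (x i) \<partial>PiM I M) = (\<integral>\<^sup>+y. f y \<partial>M i)"
proof -
  have "(\<integral>\<^sup>+y. f y \<partial>M i) = (\<integral>\<^sup>+y. f y \<partial>distr (PiM I M) (M i) (\<lambda>x. x i))"
    by (subst distr_PiM_component[OF assms(1,2)]) simp_all
  also have "\<dots> = (\<integral>\<^sup>+x. f (x i) \<partial>PiM I M)"
    using assms(2,3) by (intro nn_integral_distr) auto
  finally show ?thesis by simp
qed

lemma (in sigma_finite_measure) borel_measurable_nn_integral_fun_upd:
  assumes "H \<in> borel_measurable (PiM (insert i I) (\<lambda>_. M))"
  shows "(\<lambda>w. \<integral>\<^sup>+c. H (w(i := c)) \<partial>M) \<in> borel_measurable (PiM I (\<lambda>_. M))"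
proof -
  have "(\<lambda>(w, c). H (w(i := c))) \<in> borel_measurable (PiM I (\<lambda>_. M) \<Otimes>\<^sub>M M)"
    using measurable_compose[OF measurable_add_dim assms] by (simp add: split_beta')
  then show ?thesis by (rule borel_measurable_nn_integral)
qed

lemma measurable_fun_upd_restrict_zero:
  assumes "b \<in> I" "\<And>i. i \<in> I \<Longrightarrow> sets (M i) = sets borel"
  shows "(\<lambda>r. (restrict (\<lambda>_. 0 :: real) (I - {b}))(b := r)) \<in> measurable borel (PiM I M)"
proof (rule measurable_fun_upd[where J="I - {b}"])
  have "space (M i) = UNIV" if "i \<in> I" for i
    using sets_eq_imp_space_eq[OF assms(2)[OF that]] by simp
  then have "restrict (\<lambda>_. 0) (I - {b}) \<in> space (PiM (I - {b}) M)"
    by (auto simp: space_PiM)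
  then show "(\<lambda>r. restrict (\<lambda>_. 0) (I - {b})) \<in> measurable borel (PiM (I - {b}) M)" by simp
  show "(\<lambda>r. r) \<in> measurable borel (M b)"
    using measurable_ident_sets[OF assms(2)[OF assms(1), symmetric]] .
qed (use assms(1) in auto)

context
  fixes K :: nat and \<nu> \<nu>' :: "nat \<Rightarrow> real measure" and \<pi> :: strategy and a :: nat and q :: real
  assumes prob: "\<And>b. b < K \<Longrightarrow> prob_space (\<nu> b)" "\<And>b. b < K \<Longrightarrow> prob_space (\<nu>' b)"
    and sets: "\<And>b. b < K \<Longrightarrow> sets (\<nu> b) = sets borel" "\<And>b. b < K \<Longrightarrow> sets (\<nu>' b) = sets borel"
    and other_arms: "\<And>b. b < K \<Longrightarrow> b \<noteq> a \<Longrightarrow> \<nu>' b = \<nu> b"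
    and dominates: "\<And>\<phi>. \<phi> \<in> borel_measurable borel \<Longrightarrow> ennreal q * (\<integral>\<^sup>+y. \<phi> y \<partial>\<nu> a) \<le> (\<integral>\<^sup>+y. \<phi> y \<partial>\<nu>' a)"
    and strategy: "is_strategy K \<pi>"
begin

lemma sets_PiM_round_measure': "sets (PiM I (\<lambda>_. round_measure K \<nu>')) = sets (PiM I (\<lambda>_. round_measure K \<nu>))"
  using sets by (intro sets_PiM_round_measure) simp

text \<open>Given the auxiliary draw \<open>u\<close> of round \<open>T\<close>, the pulled arm \<open>b\<close> is fixed and a history-invariant
  \<open>F\<close> sees only the reward \<open>x b\<close>; for \<open>b \<noteq> a\<close> nothing changes, for \<open>b = a\<close> the domination applies.\<close>

lemma change_of_measure_reward:
  assumes w: "w \<in> space (PiM {..<T} (\<lambda>_. round_measure K \<nu>))"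
    and F: "F \<in> borel_measurable (PiM (insert T {..<T}) (\<lambda>_. round_measure K \<nu>))"
    and F_history: "\<And>w1 w2. same_history \<pi> (Suc T) w1 w2 \<Longrightarrow> F w1 = F w2"
  shows "(\<integral>\<^sup>+x. (if arm \<pi> (w(T := (u, x))) T = a then ennreal q else 1) * F (w(T := (u, x))) \<partial>PiM {..<K} \<nu>)
      \<le> (\<integral>\<^sup>+x. F (w(T := (u, x))) \<partial>PiM {..<K} \<nu>')"
proof -
  define b where "b = arm \<pi> (w(T := (u, \<lambda>_. 0))) T"
  have "b < K" unfolding b_def by (rule arm_less[OF strategy])
  have arm_b: "arm \<pi> (w(T := (u, x))) T = b" for x
    unfolding b_def by (rule same_history_arm) (auto intro: same_history_if_eq)
  define z where "z = restrict (\<lambda>_. 0::real) ({..<K} - {b})"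
  define \<phi> where "\<phi> r = F (w(T := (u, z(b := r))))" for r
  have F_eq: "F (w(T := (u, x))) = \<phi> (x b)" for x
  proof -
    have "same_history \<pi> T (w(T := (u, x))) (w(T := (u, z(b := x b))))"
      by (rule same_history_if_eq) simp
    then show ?thesis
      unfolding \<phi>_def using arm_b[of x] arm_b[of "z(b := x b)"] by (intro F_history) (simp add: same_history_Suc)
  qed
  have "(\<lambda>r. z(b := r)) \<in> measurable borel (PiM {..<K} \<nu>)"
    unfolding z_def using \<open>b < K\<close> sets(1) by (intro measurable_fun_upd_restrict_zero) auto
  then have "(\<lambda>r. (u, z(b := r))) \<in> measurable borel (round_measure K \<nu>)"
    unfolding round_measure_def by measurable
  then have \<phi>: "\<phi> \<in> borel_measurable borel"
    unfolding \<phi>_def using F measurable_component_update[OF w, of T] by measurable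
  have \<phi>_\<mu>: "\<phi> \<in> borel_measurable \<mu>" if "sets \<mu> = sets borel" for \<mu>
    using \<phi> unfolding measurable_cong_sets[OF that refl] .
  have PiM_eq: "(\<integral>\<^sup>+x. \<phi> (x b) \<partial>PiM {..<K} \<mu>) = (\<integral>\<^sup>+r. \<phi> r \<partial>\<mu> b)"
    if "\<And>b. b < K \<Longrightarrow> prob_space (\<mu> b)" "\<And>b. b < K \<Longrightarrow> sets (\<mu> b) = sets borel" for \<mu>
    using that \<open>b < K\<close> \<phi>_\<mu>[OF that(2)[OF \<open>b < K\<close>]] by (intro nn_integral_PiM_component) auto
  have "(\<integral>\<^sup>+x. (if arm \<pi> (w(T := (u, x))) T = a then ennreal q else 1) * F (w(T := (u, x))) \<partial>PiM {..<K} \<nu>)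
      = (\<integral>\<^sup>+x. (if b = a then ennreal q else 1) * \<phi> (x b) \<partial>PiM {..<K} \<nu>)"
    by (simp add: arm_b F_eq)
  also have "\<dots> = (if b = a then ennreal q else 1) * (\<integral>\<^sup>+x. \<phi> (x b) \<partial>PiM {..<K} \<nu>)"
    using measurable_compose[OF measurable_component_singleton[of b "{..<K}" \<nu>] \<phi>_\<mu>[OF sets(1)[OF \<open>b < K\<close>]]]
      \<open>b < K\<close>
    by (intro nn_integral_cmult) auto
  also have "\<dots> = (if b = a then ennreal q else 1) * (\<integral>\<^sup>+r. \<phi> r \<partial>\<nu> b)"
    by (simp add: PiM_eq[OF prob(1) sets(1)])
  also have "\<dots> \<le> (\<integral>\<^sup>+r. \<phi> r \<partial>\<nu>' b)"
    using dominates[OF \<phi>] other_arms[OF \<open>b < K\<close>] by (cases "b = a") auto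
  also have "\<dots> = (\<integral>\<^sup>+x. F (w(T := (u, x))) \<partial>PiM {..<K} \<nu>')"
    by (simp add: F_eq PiM_eq[OF prob(2) sets(2)])
  finally show ?thesis .
qed

lemma change_of_measure_round:
  assumes w: "w \<in> space (PiM {..<T} (\<lambda>_. round_measure K \<nu>))"
    and F: "F \<in> borel_measurable (PiM (insert T {..<T}) (\<lambda>_. round_measure K \<nu>))"
    and F_history: "\<And>w1 w2. same_history \<pi> (Suc T) w1 w2 \<Longrightarrow> F w1 = F w2"
  shows "(\<integral>\<^sup>+c. (if arm \<pi> (w(T := c)) T = a then ennreal q else 1) * F (w(T := c)) \<partial>round_measure K \<nu>)
      \<le> (\<integral>\<^sup>+c. F (w(T := c)) \<partial>round_measure K \<nu>')"
proof -
  interpret X: prob_space "PiM {..<K} \<nu>" by (intro prob_space_PiM prob(1)) simp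
  interpret X': prob_space "PiM {..<K} \<nu>'" by (intro prob_space_PiM prob(2)) simp
  have "w \<in> space (PiM {..<T} (\<lambda>_. round_measure K \<nu>'))"
    using w unfolding sets_eq_imp_space_eq[OF sets_PiM_round_measure'] .
  from measurable_component_update[OF this, of T] measurable_component_update[OF w, of T]
  have upd': "(\<lambda>c. w(T := c)) \<in> measurable (round_measure K \<nu>') (PiM (insert T {..<T}) (\<lambda>_. round_measure K \<nu>'))"
    and upd: "(\<lambda>c. w(T := c)) \<in> measurable (round_measure K \<nu>) (PiM (insert T {..<T}) (\<lambda>_. round_measure K \<nu>))"
    by simp_all
  have F': "F \<in> borel_measurable (PiM (insert T {..<T}) (\<lambda>_. round_measure K \<nu>'))"
    using F unfolding measurable_cong_sets[OF sets_PiM_round_measure' refl] .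
  define fac where "fac w = (if arm \<pi> w T = a then ennreal q else 1)" for w
  have "fac \<in> borel_measurable (PiM (insert T {..<T}) (\<lambda>_. round_measure K \<nu>))"
    unfolding fac_def by (rule measurable_comp_arm[OF sets(1) strategy]) auto
  then have integrand: "(\<lambda>c. fac (w(T := c)) * F (w(T := c))) \<in> borel_measurable (round_measure K \<nu>)"
    using F upd by measurable
  have "(\<integral>\<^sup>+c. fac (w(T := c)) * F (w(T := c)) \<partial>round_measure K \<nu>)
      = (\<integral>\<^sup>+u. \<integral>\<^sup>+x. fac (w(T := (u, x))) * F (w(T := (u, x))) \<partial>PiM {..<K} \<nu> \<partial>uniform_measure lborel {0..1})"
    using X.nn_integral_fst[OF integrand[unfolded round_measure_def]] by (simp add: round_measure_def)
  also have "\<dots> \<le> (\<integral>\<^sup>+u. \<integral>\<^sup>+x. F (w(T := (u, x))) \<partial>PiM {..<K} \<nu>' \<partial>uniform_measure lborel {0..1})"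
    unfolding fac_def by (intro nn_integral_mono change_of_measure_reward[OF w F F_history])
  also have "\<dots> = (\<integral>\<^sup>+c. F (w(T := c)) \<partial>round_measure K \<nu>')"
    using X'.nn_integral_fst[OF measurable_compose[OF upd' F', unfolded round_measure_def]]
    by (simp add: round_measure_def)
  finally show ?thesis by (simp add: fac_def)
qed

lemma nn_integral_power_pulls_Suc:
  assumes F: "F \<in> borel_measurable (PiM (insert T {..<T}) (\<lambda>_. round_measure K \<nu>))"
  shows "(\<integral>\<^sup>+w. ennreal q ^ pulls \<pi> a w (Suc T) * F w \<partial>PiM {..<Suc T} (\<lambda>_. round_measure K \<nu>))
    = (\<integral>\<^sup>+w. ennreal q ^ pulls \<pi> a w T *
        (\<integral>\<^sup>+c. (if arm \<pi> (w(T := c)) T = a then ennreal q else 1) * F (w(T := c)) \<partial>round_measure K \<nu>)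
      \<partial>PiM {..<T} (\<lambda>_. round_measure K \<nu>))"
proof -
  interpret R: prob_space "round_measure K \<nu>" by (rule prob_space_round_measure[OF prob(1)])
  interpret P: product_sigma_finite "\<lambda>_::nat. round_measure K \<nu>"
    by (simp add: product_sigma_finite_def R.sigma_finite_measure_axioms)
  define fac where "fac w = (if arm \<pi> w T = a then ennreal q else 1)" for w
  have fac: "fac \<in> borel_measurable (PiM (insert T {..<T}) (\<lambda>_. round_measure K \<nu>))"
    unfolding fac_def by (rule measurable_comp_arm[OF sets(1) strategy]) auto
  have "(\<lambda>w. ennreal q ^ pulls \<pi> a w (Suc T)) \<in> borel_measurable (PiM (insert T {..<T}) (\<lambda>_. round_measure K \<nu>))"
    by (rule borel_measurable_power_pulls[OF sets(1) strategy]) auto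
  then have "(\<integral>\<^sup>+w. ennreal q ^ pulls \<pi> a w (Suc T) * F w \<partial>PiM (insert T {..<T}) (\<lambda>_. round_measure K \<nu>))
      = (\<integral>\<^sup>+w. \<integral>\<^sup>+c. ennreal q ^ pulls \<pi> a (w(T := c)) (Suc T) * F (w(T := c)) \<partial>round_measure K \<nu>
          \<partial>PiM {..<T} (\<lambda>_. round_measure K \<nu>))"
    using F by (intro P.product_nn_integral_insert) auto
  also have "\<dots> = (\<integral>\<^sup>+w. ennreal q ^ pulls \<pi> a w T * (\<integral>\<^sup>+c. fac (w(T := c)) * F (w(T := c)) \<partial>round_measure K \<nu>)
      \<partial>PiM {..<T} (\<lambda>_. round_measure K \<nu>))"
  proof (rule nn_integral_cong)
    fix w assume "w \<in> space (PiM {..<T} (\<lambda>_. round_measure K \<nu>))"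
    from measurable_component_update[OF this, of T]
    have upd: "(\<lambda>c. w(T := c)) \<in> measurable (round_measure K \<nu>) (PiM (insert T {..<T}) (\<lambda>_. round_measure K \<nu>))"
      by simp
    have "ennreal q ^ pulls \<pi> a (w(T := c)) (Suc T) * F (w(T := c))
        = ennreal q ^ pulls \<pi> a w T * (fac (w(T := c)) * F (w(T := c)))" for c
      by (simp add: fac_def pulls_Suc pulls_fun_upd mult_ac)
    then show "(\<integral>\<^sup>+c. ennreal q ^ pulls \<pi> a (w(T := c)) (Suc T) * F (w(T := c)) \<partial>round_measure K \<nu>)
        = ennreal q ^ pulls \<pi> a w T * (\<integral>\<^sup>+c. fac (w(T := c)) * F (w(T := c)) \<partial>round_measure K \<nu>)"
      using measurable_compose[OF upd F] measurable_compose[OF upd fac]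
      by (simp add: nn_integral_cmult)
  qed
  finally show ?thesis by (simp add: fac_def lessThan_Suc)
qed

lemma change_of_measure:
  assumes "F \<in> borel_measurable (PiM {..<T} (\<lambda>_. round_measure K \<nu>))"
    and "\<And>w1 w2. same_history \<pi> T w1 w2 \<Longrightarrow> F w1 = F w2"
  shows "(\<integral>\<^sup>+w. ennreal q ^ pulls \<pi> a w T * F w \<partial>PiM {..<T} (\<lambda>_. round_measure K \<nu>))
      \<le> (\<integral>\<^sup>+w. F w \<partial>PiM {..<T} (\<lambda>_. round_measure K \<nu>'))"
  using assms
proof (induction T arbitrary: F)
  case 0
  then show ?case by (simp add: PiM_empty pulls_def)
next
  case (Suc T)
  interpret R: prob_space "round_measure K \<nu>" by (rule prob_space_round_measure[OF prob(1)])
  interpret P': product_sigma_finite "\<lambda>_::nat. round_measure K \<nu>'"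
    using prob_space_round_measure[OF prob(2)]
    by (simp add: product_sigma_finite_def prob_space_imp_sigma_finite)
  have F: "F \<in> borel_measurable (PiM (insert T {..<T}) (\<lambda>_. round_measure K \<nu>))"
    using Suc.prems(1) by (simp add: lessThan_Suc)
  define G where "G w = (\<integral>\<^sup>+c. (if arm \<pi> (w(T := c)) T = a then ennreal q else 1) * F (w(T := c))
    \<partial>round_measure K \<nu>)" for w
  have "(\<lambda>w. if arm \<pi> w T = a then ennreal q else 1) \<in> borel_measurable (PiM (insert T {..<T}) (\<lambda>_. round_measure K \<nu>))"
    by (rule measurable_comp_arm[OF sets(1) strategy]) auto
  from borel_measurable_times_ennreal[OF this F]
  have G: "G \<in> borel_measurable (PiM {..<T} (\<lambda>_. round_measure K \<nu>))"
    unfolding G_def by (rule R.borel_measurable_nn_integral_fun_upd)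
  have G_history: "G w1 = G w2" if "same_history \<pi> T w1 w2" for w1 w2
    unfolding G_def
  proof (intro nn_integral_cong arg_cong2[where f=times])
    fix c
    have same: "same_history \<pi> T (w1(T := c)) (w2(T := c))" by (rule same_history_fun_upd[OF that])
    then have arm: "arm \<pi> (w1(T := c)) T = arm \<pi> (w2(T := c)) T" by (rule same_history_arm) simp
    then show "(if arm \<pi> (w1(T := c)) T = a then ennreal q else 1) = (if arm \<pi> (w2(T := c)) T = a then ennreal q else 1)"
      by simp
    from same arm show "F (w1(T := c)) = F (w2(T := c))"
      by (intro Suc.prems(2)) (simp only: same_history_Suc fun_upd_same simp_thms)
  qed
  have "(\<integral>\<^sup>+w. ennreal q ^ pulls \<pi> a w (Suc T) * F w \<partial>PiM {..<Suc T} (\<lambda>_. round_measure K \<nu>))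
      = (\<integral>\<^sup>+w. ennreal q ^ pulls \<pi> a w T * G w \<partial>PiM {..<T} (\<lambda>_. round_measure K \<nu>))"
    unfolding G_def by (rule nn_integral_power_pulls_Suc[OF F])
  also have "\<dots> \<le> (\<integral>\<^sup>+w. G w \<partial>PiM {..<T} (\<lambda>_. round_measure K \<nu>'))"
    by (rule Suc.IH[OF G G_history])
  also have "\<dots> \<le> (\<integral>\<^sup>+w. \<integral>\<^sup>+c. F (w(T := c)) \<partial>round_measure K \<nu>' \<partial>PiM {..<T} (\<lambda>_. round_measure K \<nu>'))"
    unfolding G_def using sets_eq_imp_space_eq[OF sets_PiM_round_measure'[of "{..<T}"]]
    by (intro nn_integral_mono change_of_measure_round[OF _ F Suc.prems(2)]) auto
  also have "\<dots> = (\<integral>\<^sup>+w. F w \<partial>PiM {..<Suc T} (\<lambda>_. round_measure K \<nu>'))"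
    using F unfolding lessThan_Suc measurable_cong_sets[OF sets_PiM_round_measure'[symmetric] refl]
    by (intro P'.product_nn_integral_insert[symmetric]) auto
  finally show ?case .
qed

lemma change_of_measure_few_pulls:
  assumes "0 \<le> q" "q \<le> 1"
  shows "q ^ n * (\<integral>w. (if pulls \<pi> a w T \<le> n then 1 else 0) \<partial>bandit_space K \<nu>)
      \<le> (\<integral>w. (if pulls \<pi> a w T \<le> n then 1 else 0) \<partial>bandit_space K \<nu>')"
proof -
  define f where "f w = ennreal (if pulls \<pi> a w T \<le> n then 1 else 0)" for w
  have f: "f \<in> borel_measurable (PiM {..<T} (\<lambda>_. round_measure K \<nu>))"
    using borel_measurable_few_pulls[OF sets(1) strategy subset_refl] unfolding f_def by measurable
  have nonneg: "0 \<le> (\<integral>w. (if pulls \<pi> a w T \<le> n then 1 else 0 :: real) \<partial>bandit_space K \<mu>)" for \<mu>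
    by (intro integral_nonneg_AE) simp
  have "ennreal (q ^ n * (\<integral>w. (if pulls \<pi> a w T \<le> n then 1 else 0) \<partial>bandit_space K \<nu>))
      = ennreal (q ^ n) * (\<integral>\<^sup>+w. f w \<partial>PiM {..<T} (\<lambda>_. round_measure K \<nu>))"
    using assms nonneg by (simp add: f_def ennreal_mult nn_integral_few_pulls[OF prob(1) sets(1) strategy])
  also have "\<dots> = (\<integral>\<^sup>+w. ennreal (q ^ n) * f w \<partial>PiM {..<T} (\<lambda>_. round_measure K \<nu>))"
    by (rule nn_integral_cmult[OF f, symmetric])
  also have "\<dots> \<le> (\<integral>\<^sup>+w. ennreal q ^ pulls \<pi> a w T * f w \<partial>PiM {..<T} (\<lambda>_. round_measure K \<nu>))"
    using assms by (intro nn_integral_mono)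
      (auto simp: f_def ennreal_power[symmetric] intro!: power_decreasing)
  also have "\<dots> \<le> (\<integral>\<^sup>+w. f w \<partial>PiM {..<T} (\<lambda>_. round_measure K \<nu>'))"
    by (rule change_of_measure[OF f]) (simp add: f_def pulls_cong)
  also have "\<dots> = ennreal (\<integral>w. (if pulls \<pi> a w T \<le> n then 1 else 0) \<partial>bandit_space K \<nu>')"
    unfolding f_def by (rule nn_integral_few_pulls[OF prob(2) sets(2) strategy])
  finally show ?thesis
    using nonneg by simp
qed

lemma regret_transfer:
  assumes q: "0 \<le> q" "q \<le> 1" and "a < K" "n \<le> T"
    and gap: "0 < mu_star K \<nu> - mean (\<nu> a)"
    and regret_small: "2 * regret K \<nu> \<pi> T \<le> (mu_star K \<nu> - mean (\<nu> a)) * (real n + 1)"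
    and margin: "\<And>b. b < K \<Longrightarrow> b \<noteq> a \<Longrightarrow> mean (\<nu>' b) + 1 \<le> mean (\<nu>' a)"
  shows "(real T - real n) * (q ^ n / 2) \<le> regret K \<nu>' \<pi> T"
proof -
  have "q ^ n * (1 / 2) \<le> q ^ n * (\<integral>w. (if pulls \<pi> a w T \<le> n then 1 else 0) \<partial>bandit_space K \<nu>)"
    using q half_le_prob_few_pulls[OF prob(1) sets(1) strategy gap regret_small] by (intro mult_left_mono) auto
  also have "\<dots> \<le> (\<integral>w. (if pulls \<pi> a w T \<le> n then 1 else 0) \<partial>bandit_space K \<nu>')"
    by (rule change_of_measure_few_pulls[OF q])
  finally have "(real T - real n) * (q ^ n / 2)
      \<le> (real T - real n) * (\<integral>w. (if pulls \<pi> a w T \<le> n then 1 else 0) \<partial>bandit_space K \<nu>')"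
    using \<open>n \<le> T\<close> by (intro mult_left_mono) auto
  also have "\<dots> \<le> regret K \<nu>' \<pi> T"
    using \<open>a < K\<close> \<open>n \<le> T\<close> margin by (intro few_pulls_of_best_arm_le_regret prob sets strategy) auto
  finally show ?thesis .
qed

lemma regret_transfer_log:
  assumes "0 < c" and q_eq: "q = exp (- 1 / (8 * c))" and "a < K" "2 \<le> T"
    and gap: "0 < mu_star K \<nu> - mean (\<nu> a)"
    and regret_small: "regret K \<nu> \<pi> T \<le> (mu_star K \<nu> - mean (\<nu> a)) * (c * ln (real T))"
    and T_large: "2 * c * ln (real T) < real T"
    and margin: "\<And>b. b < K \<Longrightarrow> b \<noteq> a \<Longrightarrow> mean (\<nu>' b) + 1 \<le> mean (\<nu>' a)"
  shows "(real T - 2 * c * ln (real T)) * (real T powr (-1/4) / 2) \<le> regret K \<nu>' \<pi> T"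
proof -
  define L where "L = ln (real T)"
  define n where "n = nat \<lfloor>2 * c * L\<rfloor>"
  have "0 < L" using \<open>2 \<le> T\<close> by (simp add: L_def)
  then have n: "real n \<le> 2 * c * L" "2 * c * L < real n + 1" using \<open>0 < c\<close> by (simp_all add: n_def)
  then have "n \<le> T" using T_large by (simp add: L_def)
  have "2 * regret K \<nu> \<pi> T \<le> (mu_star K \<nu> - mean (\<nu> a)) * (2 * c * L)"
    using regret_small by (simp add: L_def)
  also have "\<dots> \<le> (mu_star K \<nu> - mean (\<nu> a)) * (real n + 1)"
    using n gap by (intro mult_left_mono) auto
  finally have regret_small': "2 * regret K \<nu> \<pi> T \<le> (mu_star K \<nu> - mean (\<nu> a)) * (real n + 1)" .
  have q: "0 \<le> q" "q \<le> 1" using \<open>0 < c\<close> by (auto simp: q_eq)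
  have "real T powr (-1/4) = exp (- (1 / (8 * c)) * (2 * c * L))"
    using \<open>0 < c\<close> \<open>2 \<le> T\<close> by (simp add: powr_def L_def)
  also have "\<dots> \<le> exp (- (1 / (8 * c)) * real n)"
    using mult_left_mono_neg[OF n(1), of "- (1 / (8 * c))"] \<open>0 < c\<close> by simp
  also have "\<dots> = q ^ n" by (simp add: q_eq exp_of_nat_mult[symmetric] mult.commute)
  finally have "(real T - 2 * c * L) * (real T powr (-1/4) / 2) \<le> (real T - real n) * (q ^ n / 2)"
    using n T_large by (intro mult_mono) (auto simp: L_def)
  also have "\<dots> \<le> regret K \<nu>' \<pi> T"
    using q \<open>a < K\<close> \<open>n \<le> T\<close> gap regret_small' margin by (rule regret_transfer)
  finally show ?thesis by (simp add: L_def)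
qed

end

subsection \<open>The lower bound\<close>

lemma raise_arm:
  assumes D: "upward_closed_model D" and bandit: "bandit_in D K \<nu>" and "a < K" and q: "0 < q" "q < 1"
  obtains \<nu>' where "bandit_in D K \<nu>'" "\<And>b. b \<noteq> a \<Longrightarrow> \<nu>' b = \<nu> b"
    "\<And>\<phi>. \<phi> \<in> borel_measurable borel \<Longrightarrow> ennreal q * (\<integral>\<^sup>+y. \<phi> y \<partial>\<nu> a) \<le> (\<integral>\<^sup>+y. \<phi> y \<partial>\<nu>' a)"
    "\<And>b. b < K \<Longrightarrow> b \<noteq> a \<Longrightarrow> mean (\<nu>' b) + 1 \<le> mean (\<nu>' a)"
proof -
  have "\<nu> a \<in> D" using bandit \<open>a < K\<close> by (simp add: bandit_in_def)
  then obtain m M where \<nu>a: "\<nu> a \<in> D_mM m M" and DM: "\<And>M'. M \<le> M' \<Longrightarrow> D_mM m M' \<subseteq> D"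
    using upward_closed_modelE[OF D] by blast
  define \<epsilon> where "\<epsilon> = 1 - q"
  have \<epsilon>: "0 < \<epsilon>" "\<epsilon> \<le> 1" using q by (auto simp: \<epsilon>_def)
  define x where "x = max M (m + (mu_star K \<nu> - m + 1) / \<epsilon>)"
  have x: "M \<le> x" "m + (mu_star K \<nu> - m + 1) / \<epsilon> \<le> x" by (auto simp: x_def)
  define \<nu>' where "\<nu>' = \<nu>(a := mix_dirac (\<nu> a) \<epsilon> x)"
  have "mix_dirac (\<nu> a) \<epsilon> x \<in> D"
    using mix_dirac_in_D_mM[OF \<nu>a] DM[OF x(1)] \<epsilon> x by auto
  then have "bandit_in D K \<nu>'" using bandit by (simp add: bandit_in_def \<nu>'_def)
  moreover have "\<nu>' b = \<nu> b" if "b \<noteq> a" for b using that by (simp add: \<nu>'_def)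
  moreover have "ennreal q * (\<integral>\<^sup>+y. \<phi> y \<partial>\<nu> a) \<le> (\<integral>\<^sup>+y. \<phi> y \<partial>\<nu>' a)"
    if "\<phi> \<in> borel_measurable borel" for \<phi>
    using that \<epsilon> D_mMD[OF \<nu>a] by (simp add: \<nu>'_def nn_integral_mix_dirac \<epsilon>_def)
  moreover have "mean (\<nu>' b) + 1 \<le> mean (\<nu>' a)" if "b < K" "b \<noteq> a" for b
  proof -
    have "mu_star K \<nu> - m + 1 \<le> \<epsilon> * (x - m)"
      using \<epsilon> x(2) by (simp add: field_simps)
    moreover have "m + \<epsilon> * (x - m) \<le> mean (\<nu>' a)"
      using \<epsilon> x(1) by (simp add: \<nu>'_def mean_mix_dirac_ge[OF \<nu>a])
    moreover have "mean (\<nu>' b) \<le> mu_star K \<nu>"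
      using mean_le_mu_star[OF \<open>b < K\<close>, of \<nu>] that by (simp add: \<nu>'_def)
    ultimately show ?thesis by linarith
  qed
  ultimately show thesis by (rule that)
qed

lemma not_tendsto_div_sqrt_zero:
  assumes "frequently (\<lambda>T. (real T - 2 * c * ln (real T)) * (real T powr (-1/4) / 2) \<le> R T) sequentially"
  shows "\<not> (\<lambda>T. R T / real T powr (1/2)) \<longlonglongrightarrow> 0"
proof
  assume "(\<lambda>T. R T / real T powr (1/2)) \<longlonglongrightarrow> 0"
  then have "eventually (\<lambda>T. R T / real T powr (1/2) < 1) sequentially"
    by (rule order_tendstoD) simp
  moreover have "eventually (\<lambda>T. real T powr (1/2) < (real T - 2 * c * ln (real T)) * (real T powr (-1/4) / 2))
      sequentially"
    by real_asymp
  moreover have "eventually (\<lambda>T. 1 \<le> T) sequentially" by (rule eventually_ge_at_top)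
  ultimately have "eventually (\<lambda>T. \<not> (real T - 2 * c * ln (real T)) * (real T powr (-1/4) / 2) \<le> R T) sequentially"
    by eventually_elim (simp add: divide_less_eq)
  then show False using assms by (simp add: frequently_def)
qed

lemma liminf_regret_div_ln_eq_infinity:
  assumes D: "upward_closed_model D" and strategy: "is_strategy K \<pi>"
    and fast: "uniformly_fast_convergent D K \<pi>" and bandit: "bandit_in D K \<nu>"
    and "a < K" and gap: "0 < mu_star K \<nu> - mean (\<nu> a)"
  shows "liminf (\<lambda>T. ereal (regret K \<nu> \<pi> T / ln (real T))) = \<infinity>"
proof (rule ccontr)
  assume "liminf (\<lambda>T. ereal (regret K \<nu> \<pi> T / ln (real T))) \<noteq> \<infinity>"
  then obtain r where often_small: "frequently (\<lambda>T. regret K \<nu> \<pi> T / ln (real T) \<le> r) sequentially"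
    unfolding liminf_PInfty[symmetric] tendsto_PInfty not_all not_eventually by (auto simp: not_less)
  define \<Delta> where "\<Delta> = mu_star K \<nu> - mean (\<nu> a)"
  define c where "c = max r 1 / \<Delta>"
  define q where "q = exp (- 1 / (8 * c))"
  have "0 < \<Delta>" "0 < c" using gap by (auto simp: \<Delta>_def c_def)
  then have q: "0 < q" "q < 1" by (auto simp: q_def)
  obtain \<nu>' where bandit': "bandit_in D K \<nu>'" and other_arms: "\<And>b. b \<noteq> a \<Longrightarrow> \<nu>' b = \<nu> b"
    and dominates: "\<And>\<phi>. \<phi> \<in> borel_measurable borel \<Longrightarrow> ennreal q * (\<integral>\<^sup>+y. \<phi> y \<partial>\<nu> a) \<le> (\<integral>\<^sup>+y. \<phi> y \<partial>\<nu>' a)"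
    and margin: "\<And>b. b < K \<Longrightarrow> b \<noteq> a \<Longrightarrow> mean (\<nu>' b) + 1 \<le> mean (\<nu>' a)"
    using raise_arm[OF D bandit \<open>a < K\<close> q] by blast
  have "\<mu> b \<in> D_all" if "bandit_in D K \<mu>" "b < K" for \<mu> b
    using that D by (auto simp: bandit_in_def upward_closed_model_def)
  note arms = D_allD[OF this[OF bandit]] D_allD[OF this[OF bandit']]
  have "eventually (\<lambda>T. 2 * c * ln (real T) < real T) sequentially" by real_asymp
  with eventually_ge_at_top[of 2]
  have "frequently (\<lambda>T. regret K \<nu> \<pi> T / ln (real T) \<le> r \<and> 2 \<le> T \<and> 2 * c * ln (real T) < real T) sequentially"
    by (intro frequently_eventually_frequently[OF often_small] eventually_conj)
  then have "frequently (\<lambda>T. (real T - 2 * c * ln (real T)) * (real T powr (-1/4) / 2) \<le> regret K \<nu>' \<pi> T)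
      sequentially"
  proof (rule frequently_elim1, elim conjE)
    fix T :: nat assume small: "regret K \<nu> \<pi> T / ln (real T) \<le> r" and "2 \<le> T" "2 * c * ln (real T) < real T"
    have "regret K \<nu> \<pi> T \<le> r * ln (real T)"
      using small \<open>2 \<le> T\<close> by (simp add: pos_divide_le_eq)
    also have "\<dots> \<le> \<Delta> * (c * ln (real T))"
      using \<open>2 \<le> T\<close> \<open>0 < \<Delta>\<close> by (simp add: c_def mult_right_mono)
    finally show "(real T - 2 * c * ln (real T)) * (real T powr (-1/4) / 2) \<le> regret K \<nu>' \<pi> T"
      by (intro regret_transfer_log[where \<nu>=\<nu> and \<nu>'=\<nu>' and a=a and q=q and c=c])
        (use arms other_arms dominates strategy \<open>0 < c\<close> \<open>a < K\<close> \<open>2 \<le> T\<close> gap margin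
          \<open>2 * c * ln (real T) < real T\<close> in \<open>simp_all add: \<Delta>_def q_def\<close>)
  qed
  then have "\<not> (\<lambda>T. regret K \<nu>' \<pi> T / real T powr (1/2)) \<longlonglongrightarrow> 0"
    by (rule not_tendsto_div_sqrt_zero)
  moreover have "(\<lambda>T. regret K \<nu>' \<pi> T / real T powr (1/2)) \<longlonglongrightarrow> 0"
    using fast bandit' by (simp add: uniformly_fast_convergent_def)
  ultimately show False by contradiction
qed

theorem theorem4:
  fixes K :: nat
  assumes "K \<ge> 2"
  shows
    "(\<forall>\<nu>. bandit_in D_all K \<nu> \<longrightarrow>
        (\<forall>a<K. mu_star K \<nu> - mean (\<nu> a) > 0 \<longrightarrow> Kinf (\<nu> a) (mu_star K \<nu>) D_all = 0))
   \<and> (\<forall>\<pi>. is_strategy K \<pi> \<and> uniformly_fast_convergent D_all K \<pi> \<longrightarrow>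
        (\<forall>\<nu>. bandit_in D_all K \<nu> \<and> (\<exists>a<K. mu_star K \<nu> - mean (\<nu> a) > 0) \<longrightarrow>
           liminf (\<lambda>T. ereal (regret K \<nu> \<pi> T / ln (real T))) = \<infinity>))
   \<and> (\<forall>m::real.
        (\<forall>\<nu>. bandit_in (D_mplus m) K \<nu> \<longrightarrow>
          (\<forall>a<K. mu_star K \<nu> - mean (\<nu> a) > 0 \<longrightarrow> Kinf (\<nu> a) (mu_star K \<nu>) (D_mplus m) = 0))
      \<and> (\<forall>\<pi>. is_strategy K \<pi> \<and> uniformly_fast_convergent (D_mplus m) K \<pi> \<longrightarrow>
          (\<forall>\<nu>. bandit_in (D_mplus m) K \<nu> \<and> (\<exists>a<K. mu_star K \<nu> - mean (\<nu> a) > 0) \<longrightarrow>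
             liminf (\<lambda>T. ereal (regret K \<nu> \<pi> T / ln (real T))) = \<infinity>)))"
proof -
  have Kinf: "Kinf (\<nu> a) t D = 0" if "upward_closed_model D" "bandit_in D K \<nu>" "a < K" for D \<nu> a t
    using that by (intro Kinf_eq_0) (auto simp: bandit_in_def)
  note lower_bound = liminf_regret_div_ln_eq_infinity
  show ?thesis
    using Kinf[OF upward_closed_model_D_all] Kinf[OF upward_closed_model_D_mplus]
      lower_bound[OF upward_closed_model_D_all] lower_bound[OF upward_closed_model_D_mplus]
    by blast
qed

end
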